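(* (a) $NN(IP_n)\ge 2^{n/2}$. (b) $NN(x_1\oplus\cdots\oplus x_n)\ge n+1$.
   Context: For a Boolean function $f:\{0,1\}^m\to\{0,1\}$, a nearest neighbor representation is a pair of disjoint sets $(P,N)$ of points of $\mathbb R^m$ such that for every $a\in\{0,1\}^m$: if $f(a)=1$, there is $b\in P$ with $d(a,b)<d(a,c)$ for all $c\in N$; if $f(a)=0$, there is $b\in N$ with $d(a,b)<d(a,c)$ for all $c\in P$ ($d$ = Euclidean distance). $NN(f)$ is the minimum of $|P\cup N|$ over all such representations. The mod 2 inner product function of $2n$ variables is $IP_n(x_1,\dots,x_n,y_1,\dots,y_n)=(x_1\wedge y_1)\oplus\cdots\oplus(x_n\wedge y_n)$. *)

theory Defs
  imports Complex_Main
begin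

text \<open>Points of R^m are real lists of length m; Boolean inputs are bool lists of length m,
  embedded into R^m via 0/1. A Boolean function of m variables is f :: bool list => bool,
  considered on lists of length m.\<close>

definition edist :: "real list \<Rightarrow> real list \<Rightarrow> real" where
  "edist a b = sqrt (\<Sum>i<length a. (a ! i - b ! i)^2)"

definition emb :: "bool list \<Rightarrow> real list" where
  "emb a = map (\<lambda>x. if x then 1 else 0) a"

definition nn_rep :: "nat \<Rightarrow> (bool list \<Rightarrow> bool) \<Rightarrow> real list set \<Rightarrow> real list set \<Rightarrow> bool" where
  "nn_rep m f P N \<longleftrightarrow>
     (\<forall>p\<in>P. length p = m) \<and> (\<forall>p\<in>N. length p = m) \<and> P \<inter> N = {} \<and>
     (\<forall>a. length a = m \<longrightarrow>
        (f a \<longrightarrow> (\<exists>b\<in>P. \<forall>c\<in>N. edist (emb a) b < edist (emb a) c)) \<and>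
        (\<not> f a \<longrightarrow> (\<exists>b\<in>N. \<forall>c\<in>P. edist (emb a) b < edist (emb a) c)))"

definition NN :: "nat \<Rightarrow> (bool list \<Rightarrow> bool) \<Rightarrow> nat" where
  "NN m f = (LEAST k. \<exists>P N. finite P \<and> finite N \<and> nn_rep m f P N \<and> card (P \<union> N) = k)"

text \<open>IP_n on 2n variables: x_i = a!i, y_i = a!(n+i).\<close>
definition IP :: "nat \<Rightarrow> bool list \<Rightarrow> bool" where
  "IP n a = odd (card {i. i < n \<and> a ! i \<and> a ! (n + i)})"

definition parity :: "bool list \<Rightarrow> bool" where
  "parity a = odd (length (filter id a))"

end

theory Submission
  imports Defs "Jordan_Normal_Form.Determinant" "HOL-Computational_Algebra.Polynomial"
    "HOL-Analysis.Convex"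
begin

text \<open>A nearest neighbour representation by \<open>k\<close> points makes \<open>f a\<close> the sign of
  \<open>\<Sum>b. \<plusminus>exp (- l * |a - b|\<^sup>2)\<close> for a large width parameter \<open>l\<close>, and on Boolean inputs each
  Gaussian is a product of positive one-variable factors. For parity, subtracting a suitable
  multiple of the restriction \<open>x\<^sub>1 = 0\<close> from the restriction \<open>x\<^sub>1 = 1\<close> cancels one summand and
  represents the complementary parity in one variable less, so \<open>k \<ge> n + 1\<close>. For \<open>IP\<^sub>n\<close>, splitting
  each product into its \<open>x\<close>- and \<open>y\<close>-half shows that the \<open>2\<^sup>n \<times> 2\<^sup>n\<close> Hadamard sign matrix has
  sign-rank at most \<open>k\<close>. Forster's theorem bounds the sign-rank of an \<open>N \<times> N\<close> sign matrix of
  operator norm \<open>\<sigma>\<close> by \<open>N / \<sigma>\<close>, which is \<open>2\<^sup>n\<^sup>/\<^sup>2\<close> here. Its proof puts the representing vectors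
  in general position and then, by minimizing a potential, in almost isotropic position, where
  a Cauchy-Schwarz argument compares the two sides.\<close>

section \<open>Nearest neighbour representations\<close>

definition sqdist_emb :: "real list \<Rightarrow> bool list \<Rightarrow> real" where
  "sqdist_emb y a = (\<Sum>i<length a. (emb a ! i - y ! i)\<^sup>2)"

lemma length_emb [simp]: "length (emb a) = length a"
  by (simp add: emb_def)

lemma nth_emb: "i < length a \<Longrightarrow> emb a ! i = (if a ! i then 1 else 0)"
  by (simp add: emb_def)

lemma inj_emb: "emb a = emb a' \<longleftrightarrow> a = a'"
  unfolding emb_def by (rule inj_map_eq_map) (simp add: inj_def)

lemma edist_emb: "edist (emb a) y = sqrt (sqdist_emb y a)"
  by (simp add: edist_def sqdist_emb_def)

lemma edist_emb_less_iff: "edist (emb a) b < edist (emb a) c \<longleftrightarrow> sqdist_emb b a < sqdist_emb c a"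
  by (simp add: edist_emb)

lemma sqdist_emb_self [simp]: "sqdist_emb (emb a) a = 0"
  by (simp add: sqdist_emb_def)

lemma sqdist_emb_pos:
  assumes "length a' = length a" and "a' \<noteq> a"
  shows "0 < sqdist_emb (emb a') a"
proof -
  obtain i where i: "i < length a" "a ! i \<noteq> a' ! i"
    using assms nth_equalityI[of a' a] by auto
  have "0 < (emb a ! i - emb a' ! i)\<^sup>2"
    using i assms by (auto simp: nth_emb)
  also have "\<dots> \<le> sqdist_emb (emb a') a"
    unfolding sqdist_emb_def using i by (intro member_le_sum) auto
  finally show ?thesis .
qed

lemma exp_sqdist_emb:
  assumes "length a = m"
  shows "exp (- (l * sqdist_emb y a)) =
    (\<Prod>i<m. if a ! i then exp (- (l * (1 - y ! i)\<^sup>2)) else exp (- (l * (y ! i)\<^sup>2)))"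
proof -
  have "exp (- (l * sqdist_emb y a)) = exp (\<Sum>i<m. - (l * (emb a ! i - y ! i)\<^sup>2))"
    using assms by (simp add: sqdist_emb_def sum_distrib_left sum_negf)
  also have "\<dots> = (\<Prod>i<m. exp (- (l * (emb a ! i - y ! i)\<^sup>2)))"
    by (simp add: exp_sum)
  also have "\<dots> = (\<Prod>i<m. if a ! i then exp (- (l * (1 - y ! i)\<^sup>2)) else exp (- (l * (y ! i)\<^sup>2)))"
    using assms by (intro prod.cong) (auto simp: nth_emb power2_commute)
  finally show ?thesis .
qed

lemma finite_bool_lists_length: "finite {a :: bool list. length a = m}"
  using finite_lists_length_eq[of "UNIV :: bool set" m] by simp

lemma card_bool_lists_length: "card {a :: bool list. length a = m} = 2 ^ m"
  using card_lists_length_eq[of "UNIV :: bool set" m] by simp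

lemma nn_rep_exists: "\<exists>P N. finite P \<and> finite N \<and> nn_rep m f P N"
proof -
  define P where "P = emb ` {a. length a = m \<and> f a}"
  define N where "N = emb ` {a. length a = m \<and> \<not> f a}"
  have closest: "edist (emb a) (emb a) < edist (emb a) (emb a')"
    if "length a = m" "length a' = m" "f a' \<noteq> f a" for a a'
  proof -
    have "0 < sqdist_emb (emb a') a"
      using that by (intro sqdist_emb_pos) auto
    then show ?thesis
      unfolding edist_emb_less_iff by simp
  qed
  have "finite P" "finite N"
    unfolding P_def N_def
    by (rule finite_imageI, rule finite_subset[OF _ finite_bool_lists_length[of m]], blast)+
  moreover have "nn_rep m f P N"
    unfolding nn_rep_def
  proof (intro conjI allI impI)
    show "P \<inter> N = {}"
      unfolding P_def N_def by (auto dest: inj_emb[THEN iffD1])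
    fix a :: "bool list"
    assume a: "length a = m"
    show "\<exists>b\<in>P. \<forall>c\<in>N. edist (emb a) b < edist (emb a) c" if "f a"
    proof (intro bexI ballI)
      show "emb a \<in> P"
        using a that by (simp add: P_def)
      fix c assume "c \<in> N"
      then obtain a' where "c = emb a'" "length a' = m" "\<not> f a'"
        by (auto simp: N_def)
      then show "edist (emb a) (emb a) < edist (emb a) c"
        using closest a that by simp
    qed
    show "\<exists>b\<in>N. \<forall>c\<in>P. edist (emb a) b < edist (emb a) c" if "\<not> f a"
    proof (intro bexI ballI)
      show "emb a \<in> N"
        using a that by (simp add: N_def)
      fix c assume "c \<in> P"
      then obtain a' where "c = emb a'" "length a' = m" "f a'"
        by (auto simp: P_def)
      then show "edist (emb a) (emb a) < edist (emb a) c"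
        using closest a that by simp
    qed
  qed (auto simp: P_def N_def)
  ultimately show ?thesis by blast
qed

lemma NN_attained:
  obtains P N where "finite P" "finite N" "nn_rep m f P N" "card (P \<union> N) = NN m f"
proof -
  obtain P N where "finite P" "finite N" "nn_rep m f P N"
    using nn_rep_exists by blast
  then have "\<exists>k P N. finite P \<and> finite N \<and> nn_rep m f P N \<and> card (P \<union> N) = k"
    by (intro exI[of _ "card (P \<union> N)"] exI[of _ P] exI[of _ N]) simp
  then have "\<exists>P N. finite P \<and> finite N \<and> nn_rep m f P N \<and> card (P \<union> N) = NN m f"
    unfolding NN_def by (rule LeastI_ex)
  then show ?thesis
    using that by blast
qed

section \<open>Sign representations by sums of product functions\<close>

definition prod_sum ::
    "nat \<Rightarrow> nat \<Rightarrow> (nat \<Rightarrow> real) \<Rightarrow> (nat \<Rightarrow> nat \<Rightarrow> real) \<Rightarrow> (nat \<Rightarrow> nat \<Rightarrow> real) \<Rightarrow> bool list \<Rightarrow> real" where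
  "prod_sum k m w p q a = (\<Sum>j<k. w j * (\<Prod>i<m. if a ! i then p j i else q j i))"

definition prod_sum_rep :: "nat \<Rightarrow> nat \<Rightarrow> (bool list \<Rightarrow> bool) \<Rightarrow> bool" where
  "prod_sum_rep k m f \<longleftrightarrow> (\<exists>w p q. (\<forall>j i. 0 < p j i \<and> 0 < q j i) \<and>
     (\<forall>a. length a = m \<longrightarrow> prod_sum k m w p q a \<noteq> 0 \<and> (f a \<longleftrightarrow> 0 < prod_sum k m w p q a)))"

lemma prod_sum_Cons:
  "prod_sum k (Suc m) w p q (b # a) =
    prod_sum k m (\<lambda>j. w j * (if b then p j 0 else q j 0)) (\<lambda>j i. p j (Suc i)) (\<lambda>j i. q j (Suc i)) a"
  unfolding prod_sum_def prod.lessThan_Suc_shift by (simp del: prod.lessThan_Suc add: mult.assoc)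

lemma prod_sum_diff:
  "prod_sum k m w p q a - c * prod_sum k m v p q a = prod_sum k m (\<lambda>j. w j - c * v j) p q a"
  unfolding prod_sum_def by (simp add: sum_distrib_left sum_subtractf[symmetric] algebra_simps)

lemma prod_sum_rep_pos:
  assumes "prod_sum_rep k m f"
  shows "0 < k"
proof (rule ccontr)
  assume "\<not> 0 < k"
  then have "prod_sum k m w p q a = 0" for w p q a
    by (simp add: prod_sum_def)
  moreover have "length (replicate m False) = m"
    by simp
  ultimately show False
    using assms unfolding prod_sum_rep_def by blast
qed

lemma tendsto_exp_neg_mult_at_top: "0 < (d::real) \<Longrightarrow> ((\<lambda>l. exp (- (l * d))) \<longlongrightarrow> 0) at_top"
proof -
  assume d: "0 < d"
  have "filterlim (\<lambda>l. d * l) at_top at_top"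
    by (rule filterlim_tendsto_pos_mult_at_top[OF tendsto_const d filterlim_ident])
  then have "filterlim (\<lambda>l. l * d) at_top at_top"
    by (simp add: mult.commute)
  then have "filterlim (\<lambda>l. - (l * d)) at_bot at_top"
    by (simp add: filterlim_uminus_at_top)
  then show ?thesis
    by (rule filterlim_compose[OF exp_at_bot])
qed

lemma eventually_sum_exp_less:
  fixes d :: "'a \<Rightarrow> real"
  assumes "finite B" and "finite A" and "b \<in> A" and closer: "\<And>c. c \<in> B \<Longrightarrow> d b < d c"
  shows "\<forall>\<^sub>F l in at_top. (\<Sum>c\<in>B. exp (- (l * d c))) < (\<Sum>a\<in>A. exp (- (l * d a)))"
proof -
  have "((\<lambda>l. \<Sum>c\<in>B. exp (- (l * (d c - d b)))) \<longlongrightarrow> 0) at_top"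
    by (rule tendsto_null_sum) (use closer in \<open>auto intro: tendsto_exp_neg_mult_at_top\<close>)
  then have "\<forall>\<^sub>F l in at_top. (\<Sum>c\<in>B. exp (- (l * (d c - d b)))) < 1"
    by (rule order_tendstoD(2)) simp
  then show ?thesis
  proof (rule eventually_mono)
    fix l :: real
    assume less: "(\<Sum>c\<in>B. exp (- (l * (d c - d b)))) < 1"
    have "(\<Sum>c\<in>B. exp (- (l * d c))) = exp (- (l * d b)) * (\<Sum>c\<in>B. exp (- (l * (d c - d b))))"
      by (simp add: sum_distrib_left exp_add[symmetric] algebra_simps)
    also have "\<dots> < exp (- (l * d b)) * 1"
      by (rule mult_strict_left_mono[OF less]) simp
    also have "\<dots> \<le> (\<Sum>a\<in>A. exp (- (l * d a)))"
      using member_le_sum[of b A "\<lambda>a. exp (- (l * d a))"] assms by simp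
    finally show "(\<Sum>c\<in>B. exp (- (l * d c))) < (\<Sum>a\<in>A. exp (- (l * d a)))" .
  qed
qed

text \<open>The signed sum of Gaussian kernels centred at the points of a nearest neighbour
  representation; for a large width parameter \<open>l\<close> the nearest centre dominates.\<close>

definition gauss_sum :: "real list set \<Rightarrow> real list set \<Rightarrow> real \<Rightarrow> bool list \<Rightarrow> real" where
  "gauss_sum P N l a = (\<Sum>y\<in>P \<union> N. (if y \<in> P then 1 else -1) * exp (- (l * sqdist_emb y a)))"

lemma gauss_sum_eq_diff:
  assumes "finite P" and "finite N" and "P \<inter> N = {}"
  shows "gauss_sum P N l a = (\<Sum>b\<in>P. exp (- (l * sqdist_emb b a))) - (\<Sum>c\<in>N. exp (- (l * sqdist_emb c a)))"
proof -
  have "(\<Sum>y\<in>N. (if y \<in> P then 1 else -1) * exp (- (l * sqdist_emb y a)))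
      = (\<Sum>c\<in>N. - exp (- (l * sqdist_emb c a)))"
    using assms(3) by (intro sum.cong) auto
  moreover have "(\<Sum>y\<in>P. (if y \<in> P then 1 else -1) * exp (- (l * sqdist_emb y a)))
      = (\<Sum>b\<in>P. exp (- (l * sqdist_emb b a)))"
    by (intro sum.cong) auto
  ultimately show ?thesis
    unfolding gauss_sum_def sum.union_disjoint[OF assms] by (simp add: sum_negf)
qed

lemma nn_rep_gauss_sum_sign:
  assumes "finite P" and "finite N" and rep: "nn_rep m f P N"
  shows "\<exists>l. \<forall>a. length a = m \<longrightarrow> (f a \<longrightarrow> 0 < gauss_sum P N l a) \<and> (\<not> f a \<longrightarrow> gauss_sum P N l a < 0)"
proof -
  have G_eq: "gauss_sum P N l a
      = (\<Sum>b\<in>P. exp (- (l * sqdist_emb b a))) - (\<Sum>c\<in>N. exp (- (l * sqdist_emb c a)))" for l a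
    using rep unfolding nn_rep_def by (intro gauss_sum_eq_diff assms) blast
  have "\<forall>\<^sub>F l in at_top. (f a \<longrightarrow> 0 < gauss_sum P N l a) \<and> (\<not> f a \<longrightarrow> gauss_sum P N l a < 0)"
    if len: "length a = m" for a
  proof (cases "f a")
    case True
    then obtain b where "b \<in> P" "\<And>c. c \<in> N \<Longrightarrow> sqdist_emb b a < sqdist_emb c a"
      using rep len unfolding nn_rep_def edist_emb_less_iff by blast
    then have "\<forall>\<^sub>F l in at_top. (\<Sum>c\<in>N. exp (- (l * sqdist_emb c a))) < (\<Sum>b\<in>P. exp (- (l * sqdist_emb b a)))"
      by (rule eventually_sum_exp_less[OF \<open>finite N\<close> \<open>finite P\<close>])
    then show ?thesis
      by (rule eventually_mono) (use True in \<open>simp add: G_eq\<close>)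
  next
    case False
    then obtain b where "b \<in> N" "\<And>c. c \<in> P \<Longrightarrow> sqdist_emb b a < sqdist_emb c a"
      using rep len unfolding nn_rep_def edist_emb_less_iff by blast
    then have "\<forall>\<^sub>F l in at_top. (\<Sum>c\<in>P. exp (- (l * sqdist_emb c a))) < (\<Sum>b\<in>N. exp (- (l * sqdist_emb b a)))"
      by (rule eventually_sum_exp_less[OF \<open>finite P\<close> \<open>finite N\<close>])
    then show ?thesis
      by (rule eventually_mono) (use False in \<open>simp add: G_eq\<close>)
  qed
  then have "\<forall>\<^sub>F l in at_top. \<forall>a\<in>{a. length a = m}.
      (f a \<longrightarrow> 0 < gauss_sum P N l a) \<and> (\<not> f a \<longrightarrow> gauss_sum P N l a < 0)"
    by (intro eventually_ball_finite finite_bool_lists_length) auto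
  then obtain L where "\<And>l. l \<ge> L \<Longrightarrow> \<forall>a\<in>{a. length a = m}.
      (f a \<longrightarrow> 0 < gauss_sum P N l a) \<and> (\<not> f a \<longrightarrow> gauss_sum P N l a < 0)"
    unfolding eventually_at_top_linorder by blast
  then show ?thesis
    by blast
qed

lemma gauss_sum_eq_prod_sum:
  assumes "finite (P \<union> N)"
  shows "\<exists>w p q. (\<forall>j i. 0 < p j i \<and> 0 < q j i) \<and>
    (\<forall>a. length a = m \<longrightarrow> prod_sum (card (P \<union> N)) m w p q a = gauss_sum P N l a)"
proof -
  obtain e where e: "bij_betw e {..<card (P \<union> N)} (P \<union> N)"
    using ex_bij_betw_nat_finite[OF assms] by (auto simp: atLeast0LessThan)
  define w where "w = (\<lambda>j. if e j \<in> P then 1 else -1 :: real)"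
  define p where "p = (\<lambda>j i. exp (- (l * (1 - e j ! i)\<^sup>2)))"
  define q where "q = (\<lambda>j i. exp (- (l * (e j ! i)\<^sup>2)))"
  have "prod_sum (card (P \<union> N)) m w p q a = gauss_sum P N l a" if "length a = m" for a
    unfolding prod_sum_def gauss_sum_def w_def p_def q_def exp_sqdist_emb[OF that, symmetric]
    by (rule sum.reindex_bij_betw[OF e])
  moreover have "\<forall>j i. 0 < p j i \<and> 0 < q j i"
    by (simp add: p_def q_def)
  ultimately show ?thesis
    by blast
qed

lemma nn_rep_imp_prod_sum_rep:
  assumes "finite P" and "finite N" and "nn_rep m f P N"
  shows "prod_sum_rep (card (P \<union> N)) m f"
proof -
  from nn_rep_gauss_sum_sign[OF assms] obtain l where
    sign: "\<forall>a. length a = m \<longrightarrow> (f a \<longrightarrow> 0 < gauss_sum P N l a) \<and> (\<not> f a \<longrightarrow> gauss_sum P N l a < 0)" ..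
  from gauss_sum_eq_prod_sum[OF finite_UnI[OF assms(1,2)]] obtain w p q where
    pos: "\<forall>j i. 0 < p j i \<and> 0 < q j i" and
    eq: "\<forall>a. length a = m \<longrightarrow> prod_sum (card (P \<union> N)) m w p q a = gauss_sum P N l a"
    by blast
  have "prod_sum (card (P \<union> N)) m w p q a \<noteq> 0 \<and> (f a \<longleftrightarrow> 0 < prod_sum (card (P \<union> N)) m w p q a)"
    if "length a = m" for a
    using sign that unfolding eq[rule_format, OF that] by auto
  with pos show ?thesis
    unfolding prod_sum_rep_def by blast
qed

section \<open>Parity\<close>

lemma parity_Cons [simp]: "parity (b # a) \<longleftrightarrow> (b \<noteq> parity a)"
  by (simp add: parity_def)

lemma sub_mult_opposite_sign:
  fixes T F c :: real
  assumes "0 < c" and "T \<noteq> 0" and "F \<noteq> 0" and "0 < T \<longleftrightarrow> \<not> 0 < F"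
  shows "T - c * F \<noteq> 0 \<and> (0 < T - c * F \<longleftrightarrow> 0 < T)"
proof (cases "0 < T")
  case True
  then have "F < 0"
    using assms(3,4) by simp
  then have "c * F < 0"
    using assms(1) by (simp add: mult_pos_neg)
  then show ?thesis
    using True by simp
next
  case False
  then have "0 < F"
    using assms(4) by simp
  then have "0 < c * F"
    using assms(1) by simp
  then show ?thesis
    using False assms(2) by simp
qed

text \<open>Eliminating the last summand by the combination \<open>F (True # a) - c * F (False # a)\<close>:
  the two values have opposite signs, so the combination keeps the sign of \<open>F (True # a)\<close>.\<close>

lemma prod_sum_rep_parity_Suc:
  assumes "prod_sum_rep (Suc k) (Suc m) (\<lambda>a. parity a = s)"
  shows "prod_sum_rep k m (\<lambda>a. parity a = (\<not> s))"
proof -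
  obtain w p q where pos: "\<forall>j i. 0 < p j i \<and> 0 < q j i" and
    rep: "\<And>a. length a = Suc m \<Longrightarrow>
      prod_sum (Suc k) (Suc m) w p q a \<noteq> 0 \<and> (parity a = s \<longleftrightarrow> 0 < prod_sum (Suc k) (Suc m) w p q a)"
    using assms unfolding prod_sum_rep_def by blast
  define c where "c = p k 0 / q k 0"
  define w' where "w' = (\<lambda>j. w j * (p j 0 - c * q j 0))"
  define p' where "p' = (\<lambda>j i. p j (Suc i))"
  define q' where "q' = (\<lambda>j i. q j (Suc i))"
  have c_pos: "0 < c"
    unfolding c_def using pos by simp
  have elim: "prod_sum (Suc k) (Suc m) w p q (True # a) - c * prod_sum (Suc k) (Suc m) w p q (False # a)
      = prod_sum k m w' p' q' a" for a
  proof -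
    have "prod_sum (Suc k) (Suc m) w p q (True # a) - c * prod_sum (Suc k) (Suc m) w p q (False # a)
        = prod_sum (Suc k) m w' p' q' a"
      unfolding prod_sum_Cons prod_sum_diff w'_def p'_def q'_def by (simp add: algebra_simps)
    also have "\<dots> = prod_sum k m w' p' q' a"
      using pos[rule_format, of k 0] by (simp add: prod_sum_def w'_def c_def)
    finally show ?thesis .
  qed
  have "prod_sum k m w' p' q' a \<noteq> 0 \<and> (parity a = (\<not> s) \<longleftrightarrow> 0 < prod_sum k m w' p' q' a)"
    if "length a = m" for a
  proof -
    define T where "T = prod_sum (Suc k) (Suc m) w p q (True # a)"
    define F where "F = prod_sum (Suc k) (Suc m) w p q (False # a)"
    have T: "T \<noteq> 0" "0 < T \<longleftrightarrow> parity a \<noteq> s" and F: "F \<noteq> 0" "0 < F \<longleftrightarrow> parity a = s"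
      using rep[of "True # a"] rep[of "False # a"] that unfolding T_def F_def by auto
    have "T - c * F \<noteq> 0 \<and> (0 < T - c * F \<longleftrightarrow> parity a \<noteq> s)"
      using sub_mult_opposite_sign[OF c_pos T(1) F(1)] T(2) F(2) by auto
    then show ?thesis
      unfolding T_def F_def elim by auto
  qed
  moreover have "\<forall>j i. 0 < p' j i \<and> 0 < q' j i"
    using pos by (simp add: p'_def q'_def)
  ultimately show ?thesis
    unfolding prod_sum_rep_def by blast
qed

lemma prod_sum_rep_parity_card: "prod_sum_rep k m (\<lambda>a. parity a = s) \<Longrightarrow> m + 1 \<le> k"
proof (induction m arbitrary: k s)
  case 0
  then show ?case
    using prod_sum_rep_pos by (simp add: Suc_leI)
next
  case (Suc m)
  then obtain k' where k: "k = Suc k'"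
    using prod_sum_rep_pos not0_implies_Suc by blast
  with Suc.prems have "prod_sum_rep k' m (\<lambda>a. parity a = (\<not> s))"
    by (simp add: prod_sum_rep_parity_Suc)
  then have "m + 1 \<le> k'"
    by (rule Suc.IH)
  with k show ?case
    by simp
qed

lemma NN_parity: "n + 1 \<le> NN n parity"
proof -
  obtain P N where "finite P" "finite N" "nn_rep n parity P N" and card: "card (P \<union> N) = NN n parity"
    by (rule NN_attained)
  then have "prod_sum_rep (NN n parity) n (\<lambda>a. parity a = True)"
    using nn_rep_imp_prod_sum_rep[of P N n parity] by simp
  then show ?thesis
    by (rule prod_sum_rep_parity_card)
qed

section \<open>Vectors and matrices as functions on \<open>{..<k}\<close>\<close>

lemma sum_bilinear_swap:
  fixes A B :: "'i \<Rightarrow> 'j \<Rightarrow> real"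
  shows "(\<Sum>i\<in>I. (\<Sum>j\<in>J. A i j * a j) * (\<Sum>l\<in>J. B i l * b l))
    = (\<Sum>j\<in>J. a j * (\<Sum>l\<in>J. (\<Sum>i\<in>I. A i j * B i l) * b l))"
proof -
  have "(\<Sum>i\<in>I. (\<Sum>j\<in>J. A i j * a j) * (\<Sum>l\<in>J. B i l * b l))
      = (\<Sum>i\<in>I. \<Sum>j\<in>J. \<Sum>l\<in>J. a j * (A i j * B i l * b l))"
    by (simp add: sum_product algebra_simps)
  also have "\<dots> = (\<Sum>j\<in>J. \<Sum>l\<in>J. \<Sum>i\<in>I. a j * (A i j * B i l * b l))"
    by (subst sum.swap) (simp add: sum.swap[of _ I])
  finally show ?thesis
    by (simp add: sum_distrib_left sum_distrib_right)
qed

definition kron :: "nat \<Rightarrow> nat \<Rightarrow> real" where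
  "kron i j = (if i = j then 1 else 0)"

lemma kron_commute: "kron i j = kron j i"
  by (simp add: kron_def)

lemma kron_refl [simp]: "kron i i = 1"
  by (simp add: kron_def)

lemma sum_kron_left [simp]: "j < k \<Longrightarrow> (\<Sum>l<k. kron j l * f l) = f j"
  by (subst sum.cong[OF refl, of _ _ "\<lambda>l. if j = l then f l else 0"]) (auto simp: kron_def)

definition dot :: "nat \<Rightarrow> (nat \<Rightarrow> real) \<Rightarrow> (nat \<Rightarrow> real) \<Rightarrow> real" where
  "dot k a b = (\<Sum>j<k. a j * b j)"

definition sqnorm :: "nat \<Rightarrow> (nat \<Rightarrow> real) \<Rightarrow> real" where
  "sqnorm k a = (\<Sum>j<k. (a j)\<^sup>2)"

definition unitize :: "nat \<Rightarrow> (nat \<Rightarrow> real) \<Rightarrow> nat \<Rightarrow> real" where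
  "unitize k a j = a j / sqrt (sqnorm k a)"

lemma dot_commute: "dot k a b = dot k b a"
  unfolding dot_def by (simp add: mult.commute)

lemma dot_self: "dot k a a = sqnorm k a"
  unfolding dot_def sqnorm_def by (simp add: power2_eq_square)

lemma dot_add_scale_left: "dot k (\<lambda>j. a j + e * b j) c = dot k a c + e * dot k b c"
  unfolding dot_def by (simp add: algebra_simps sum.distrib sum_distrib_left)

lemma sqnorm_nonneg [simp]: "0 \<le> sqnorm k a"
  unfolding sqnorm_def by (simp add: sum_nonneg)

lemma sqnorm_eq_0_imp: "sqnorm k a = 0 \<Longrightarrow> j < k \<Longrightarrow> a j = 0"
  unfolding sqnorm_def using sum_nonneg_eq_0_iff[of "{..<k}" "\<lambda>j. (a j)\<^sup>2"] by simp

lemma dot_eq_0_if_sqnorm_eq_0: "sqnorm k a = 0 \<Longrightarrow> dot k a b = 0"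
  unfolding dot_def using sqnorm_eq_0_imp[of k a] by simp

lemma dot_square_le: "(dot k a b)\<^sup>2 \<le> sqnorm k a * sqnorm k b"
  unfolding dot_def sqnorm_def by (rule Cauchy_Schwarz_ineq_sum)

lemma abs_le_sqrt_sqnorm: "j < k \<Longrightarrow> \<bar>a j\<bar> \<le> sqrt (sqnorm k a)"
  unfolding sqnorm_def by (metis real_sqrt_abs real_sqrt_le_mono member_le_sum lessThan_iff
      finite_lessThan zero_le_power2)

lemma sqnorm_unitize: "0 < sqnorm k a \<Longrightarrow> sqnorm k (unitize k a) = 1"
  unfolding sqnorm_def unitize_def
  by (simp add: power_divide flip: sum_divide_distrib sqnorm_def)

lemma dot_unitize_left: "dot k (unitize k a) b = dot k a b / sqrt (sqnorm k a)"
  unfolding dot_def unitize_def by (simp add: sum_divide_distrib)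

lemma dot_unitize_right: "dot k a (unitize k b) = dot k a b / sqrt (sqnorm k b)"
  unfolding dot_def unitize_def by (simp add: sum_divide_distrib)

lemma sq_dot_unitize_le_abs:
  assumes "0 < sqnorm k a" and "0 < sqnorm k b"
  shows "(dot k (unitize k a) (unitize k b))\<^sup>2 \<le> \<bar>dot k (unitize k a) (unitize k b)\<bar>"
proof -
  let ?r = "dot k (unitize k a) (unitize k b)"
  have "?r\<^sup>2 \<le> 1"
    using dot_square_le[of k "unitize k a" "unitize k b"] assms by (simp add: sqnorm_unitize)
  then have "\<bar>?r\<bar> \<le> 1"
    by (simp add: abs_square_le_1)
  then have "\<bar>?r\<bar> * \<bar>?r\<bar> \<le> \<bar>?r\<bar> * 1"
    by (intro mult_left_mono) simp_all
  then show ?thesis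
    by (simp add: power2_eq_square)
qed

definition mat_vec :: "nat \<Rightarrow> (nat \<Rightarrow> nat \<Rightarrow> real) \<Rightarrow> (nat \<Rightarrow> real) \<Rightarrow> nat \<Rightarrow> real" where
  "mat_vec k A a i = (\<Sum>j<k. A i j * a j)"

definition mat_mul :: "nat \<Rightarrow> (nat \<Rightarrow> nat \<Rightarrow> real) \<Rightarrow> (nat \<Rightarrow> nat \<Rightarrow> real) \<Rightarrow> nat \<Rightarrow> nat \<Rightarrow> real" where
  "mat_mul k A B i j = (\<Sum>l<k. A i l * B l j)"

definition mat_det :: "nat \<Rightarrow> (nat \<Rightarrow> nat \<Rightarrow> real) \<Rightarrow> real" where
  "mat_det k A = det (mat k k (\<lambda>(i, j). A i j))"

definition orthonormal_columns :: "nat \<Rightarrow> (nat \<Rightarrow> nat \<Rightarrow> real) \<Rightarrow> bool" where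
  "orthonormal_columns k Q \<longleftrightarrow> (\<forall>i<k. \<forall>j<k. (\<Sum>l<k. Q l i * Q l j) = kron i j)"

lemma dot_mat_vec:
  "dot k (mat_vec k A a) (mat_vec k B b) = (\<Sum>j<k. a j * (\<Sum>l<k. (\<Sum>i<k. A i j * B i l) * b l))"
  unfolding dot_def mat_vec_def by (rule sum_bilinear_swap)

lemma dot_mat_vec_dual:
  assumes "\<And>j l. j < k \<Longrightarrow> l < k \<Longrightarrow> (\<Sum>i<k. A i j * B i l) = kron j l"
  shows "dot k (mat_vec k A a) (mat_vec k B b) = dot k a b"
proof -
  have "(\<Sum>l<k. (\<Sum>i<k. A i j * B i l) * b l) = b j" if "j < k" for j
    using assms that by (subst sum.cong[OF refl, of _ _ "\<lambda>l. kron j l * b l"]) auto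
  then show ?thesis
    unfolding dot_mat_vec by (simp add: dot_def)
qed

lemma sqnorm_mat_vec_orthonormal_columns: "orthonormal_columns k Q \<Longrightarrow> sqnorm k (mat_vec k Q a) = sqnorm k a"
  unfolding dot_self[symmetric] by (rule dot_mat_vec_dual) (simp add: orthonormal_columns_def)

lemma mat_vec_mat_mul: "mat_vec k (mat_mul k A B) a = mat_vec k A (mat_vec k B a)"
proof
  fix i
  have "(\<Sum>j<k. (\<Sum>l<k. A i l * B l j) * a j) = (\<Sum>j<k. \<Sum>l<k. A i l * (B l j * a j))"
    by (simp add: sum_distrib_right mult.assoc)
  also have "\<dots> = (\<Sum>l<k. \<Sum>j<k. A i l * (B l j * a j))"
    by (rule sum.swap)
  also have "\<dots> = (\<Sum>l<k. A i l * (\<Sum>j<k. B l j * a j))"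
    by (simp add: sum_distrib_left)
  finally show "mat_vec k (mat_mul k A B) a i = mat_vec k A (mat_vec k B a) i"
    unfolding mat_vec_def mat_mul_def .
qed

lemma mat_mat_mul: "mat k k (\<lambda>(i, j). mat_mul k A B i j) = mat k k (\<lambda>(i, j). A i j) * mat k k (\<lambda>(i, j). B i j)"
  by (rule eq_matI) (auto simp: mat_mul_def scalar_prod_def atLeast0LessThan intro!: sum.cong)

lemma mat_det_mat_mul: "mat_det k (mat_mul k A B) = mat_det k A * mat_det k B"
  unfolding mat_det_def mat_mat_mul by (rule det_mult) auto

lemma mat_det_cong: "(\<And>i j. i < k \<Longrightarrow> j < k \<Longrightarrow> A i j = B i j) \<Longrightarrow> mat_det k A = mat_det k B"
  unfolding mat_det_def by (rule arg_cong[of _ _ det]) (rule eq_matI; simp)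

lemma mat_det_kron [simp]: "mat_det k kron = 1"
proof -
  have "mat k k (\<lambda>(i, j). kron i j) = 1\<^sub>m k"
    by (rule eq_matI) (auto simp: kron_def)
  then show ?thesis
    unfolding mat_det_def by simp
qed

lemma mat_det_scale: "mat_det k (\<lambda>i j. e * A i j) = e ^ k * mat_det k A"
proof -
  have "mat k k (\<lambda>(i, j). e * A i j) = e \<cdot>\<^sub>m mat k k (\<lambda>(i, j). A i j)"
    by (rule eq_matI) auto
  then show ?thesis
    unfolding mat_det_def by simp
qed

lemma mat_det_rows_mat_vec:
  "mat_det k (\<lambda>i. mat_vec k A (U i)) = mat_det k U * mat_det k A"
proof -
  have rows: "mat k k (\<lambda>(i, j). mat_vec k A (U i) j)
      = mat k k (\<lambda>(i, j). U i j) * transpose_mat (mat k k (\<lambda>(i, j). A i j))"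
    by (rule eq_matI) (auto simp: mat_vec_def scalar_prod_def atLeast0LessThan mult.commute intro!: sum.cong)
  show ?thesis
    unfolding mat_det_def rows by (subst det_mult[where n = k]) (auto simp: det_transpose[where n = k])
qed

lemma mat_det_expand:
  "mat_det k A = (\<Sum>p | p permutes {..<k}. of_int (sign p) * (\<Prod>i<k. A i (p i)))"
proof -
  have "mat_det k A = (\<Sum>p | p permutes {0..<k}. of_int (sign p) * (\<Prod>i = 0..<k. mat k k (\<lambda>(i, j). A i j) $$ (i, p i)))"
    unfolding mat_det_def by (rule det_def') simp
  also have "\<dots> = (\<Sum>p | p permutes {..<k}. of_int (sign p) * (\<Prod>i<k. A i (p i)))"
    unfolding atLeast0LessThan
  proof (rule sum.cong[OF refl])
    fix p assume "p \<in> {p. p permutes {..<k}}"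
    then have "\<And>i. i < k \<Longrightarrow> p i < k"
      by (auto dest: permutes_in_image)
    then show "of_int (sign p) * (\<Prod>i<k. mat k k (\<lambda>(i, j). A i j) $$ (i, p i))
        = of_int (sign p) * (\<Prod>i<k. A i (p i))"
      by (auto intro!: prod.cong)
  qed
  finally show ?thesis .
qed

text \<open>A crude Hadamard-type bound; any bound polynomial in the row norms would do.\<close>

lemma abs_mat_det_le: "\<bar>mat_det k A\<bar> \<le> fact k * (\<Prod>i<k. sqrt (sqnorm k (A i)))"
proof -
  have "\<bar>mat_det k A\<bar> \<le> (\<Sum>p | p permutes {..<k}. \<bar>of_int (sign p) * (\<Prod>i<k. A i (p i))\<bar>)"
    unfolding mat_det_expand by (rule sum_abs)
  also have "\<dots> \<le> (\<Sum>p | p permutes {..<k}. \<Prod>i<k. sqrt (sqnorm k (A i)))"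
  proof (rule sum_mono)
    fix p assume "p \<in> {p. p permutes {..<k}}"
    then have "\<And>i. i < k \<Longrightarrow> p i < k"
      by (auto dest: permutes_in_image)
    then show "\<bar>of_int (sign p) * (\<Prod>i<k. A i (p i))\<bar> \<le> (\<Prod>i<k. sqrt (sqnorm k (A i)))"
      by (auto simp: abs_mult sign_def abs_prod intro!: prod_mono abs_le_sqrt_sqnorm)
  qed
  also have "\<dots> = fact k * (\<Prod>i<k. sqrt (sqnorm k (A i)))"
    by (simp add: card_permutations)
  finally show ?thesis .
qed

lemma sqnorm_row_pos:
  assumes "mat_det k A \<noteq> 0" and "i < k"
  shows "0 < sqnorm k (A i)"
proof (rule ccontr)
  assume "\<not> 0 < sqnorm k (A i)"
  then have "sqnorm k (A i) = 0"
    using sqnorm_nonneg[of k "A i"] by linarith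
  have "\<bar>mat_det k A\<bar> \<le> fact k * (\<Prod>i<k. sqrt (sqnorm k (A i)))"
    by (rule abs_mat_det_le)
  also have "\<dots> = 0"
    using \<open>sqnorm k (A i) = 0\<close> \<open>i < k\<close> by (simp add: prod_zero_iff) blast
  finally show False
    using assms(1) by simp
qed

lemma ln_abs_mat_det_le:
  assumes "mat_det k W \<noteq> 0"
  shows "ln \<bar>mat_det k W\<bar> \<le> ln (fact k) + (\<Sum>i<k. ln (sqnorm k (W i)) / 2)"
proof -
  have pos: "0 < sqnorm k (W i)" if "i < k" for i
    using assms that by (rule sqnorm_row_pos)
  have "ln \<bar>mat_det k W\<bar> \<le> ln (fact k * (\<Prod>i<k. sqrt (sqnorm k (W i))))"
    using assms by (intro ln_mono abs_mat_det_le) auto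
  also have "\<dots> = ln (fact k) + ln (\<Prod>i<k. sqrt (sqnorm k (W i)))"
    using pos by (intro ln_mult_pos) (auto intro: prod_pos)
  also have "\<dots> = ln (fact k) + (\<Sum>i<k. ln (sqrt (sqnorm k (W i))))"
    using pos by (subst ln_prod) (auto simp: less_le)
  also have "\<dots> = ln (fact k) + (\<Sum>i<k. ln (sqnorm k (W i)) / 2)"
    using pos by (simp add: ln_sqrt less_imp_le)
  finally show ?thesis .
qed

lemma abs_mat_det_orthonormal_columns: "orthonormal_columns k Q \<Longrightarrow> \<bar>mat_det k Q\<bar> = 1"
proof -
  assume "orthonormal_columns k Q"
  then have "mat_det k (mat_mul k (\<lambda>i j. Q j i) Q) = mat_det k kron"
    by (intro mat_det_cong) (auto simp: orthonormal_columns_def mat_mul_def)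
  moreover have "mat_det k (\<lambda>i j. Q j i) = mat_det k Q"
  proof -
    have "mat k k (\<lambda>(i, j). Q j i) = transpose_mat (mat k k (\<lambda>(i, j). Q i j))"
      by (rule eq_matI) auto
    then show ?thesis
      unfolding mat_det_def by (simp add: det_transpose[where n = k])
  qed
  ultimately have "(mat_det k Q)\<^sup>2 = 1"
    by (simp add: mat_det_mat_mul power2_eq_square)
  then show ?thesis
    by (auto simp: power2_eq_1_iff)
qed

lemma ex_dual_mat:
  assumes "mat_det k A \<noteq> 0"
  obtains B where "\<And>j l. j < k \<Longrightarrow> l < k \<Longrightarrow> (\<Sum>i<k. A i j * B i l) = kron j l"
proof -
  define M where "M = mat k k (\<lambda>(i, j). A i j)"
  have M: "M \<in> carrier_mat k k"
    unfolding M_def by simp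
  have "det (transpose_mat M) \<noteq> 0"
    using assms det_transpose[OF M] unfolding mat_det_def M_def by simp
  then have "transpose_mat M \<in> Units (ring_mat TYPE(real) k ())"
    by (intro det_non_zero_imp_unit) (use M in auto)
  then obtain X where X: "X \<in> carrier_mat k k" "transpose_mat M * X = 1\<^sub>m k"
    unfolding Units_def by (auto simp: ring_mat_simps)
  show ?thesis
  proof (rule that[of "\<lambda>i l. X $$ (i, l)"])
    fix j l assume "j < k" "l < k"
    then have "(transpose_mat M * X) $$ (j, l) = (\<Sum>i<k. A i j * X $$ (i, l))"
      using X(1) unfolding M_def by (simp add: scalar_prod_def atLeast0LessThan)
    then show "(\<Sum>i<k. A i j * X $$ (i, l)) = kron j l"
      using X(2) \<open>j < k\<close> \<open>l < k\<close> by (simp add: kron_def)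
  qed
qed

section \<open>Isotropic position\<close>

lemma sum_kron_left' [simp]: "j < k \<Longrightarrow> (\<Sum>l<k. kron l j * f l) = f j"
  using sum_kron_left[of j k f] by (simp add: kron_commute)

lemma orthonormal_columns_kron: "orthonormal_columns k kron"
  unfolding orthonormal_columns_def by simp

lemma orthonormal_columns_reflection:
  assumes "0 < sqnorm k w"
  shows "orthonormal_columns k (\<lambda>i j. kron i j - 2 * w i * w j / sqnorm k w)"
  unfolding orthonormal_columns_def
proof (intro allI impI)
  fix i j assume "i < k" "j < k"
  define s where "s = sqnorm k w"
  have "(\<Sum>l<k. (kron l i - 2 * w l * w i / s) * (kron l j - 2 * w l * w j / s))
      = (\<Sum>l<k. kron l i * kron l j) - 2 * w j / s * (\<Sum>l<k. kron l i * w l)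
        - 2 * w i / s * (\<Sum>l<k. kron l j * w l) + 4 * w i * w j / s\<^sup>2 * (\<Sum>l<k. (w l)\<^sup>2)"
    by (simp add: algebra_simps sum.distrib sum_subtractf sum_distrib_left power2_eq_square sum_divide_distrib)
  also have "\<dots> = kron i j"
    using \<open>i < k\<close> \<open>j < k\<close> assms by (simp add: s_def flip: sqnorm_def) (simp add: power2_eq_square field_simps)
  finally show "(\<Sum>l<k. (kron l i - 2 * w l * w i / sqnorm k w) * (kron l j - 2 * w l * w j / sqnorm k w)) = kron i j"
    unfolding s_def .
qed

text \<open>A Householder reflection moves the first basis vector to \<open>e\<close>.\<close>

lemma ex_orthonormal_columns_first_row:
  assumes "0 < k" and "sqnorm k e = 1"
  obtains Q where "orthonormal_columns k Q" and "\<And>j. j < k \<Longrightarrow> Q 0 j = e j"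
proof (cases "\<forall>j<k. e j = kron 0 j")
  case True
  then show ?thesis
    using that orthonormal_columns_kron by auto
next
  case False
  define w where "w j = e j - kron 0 j" for j
  have "sqnorm k w \<noteq> 0"
    using False sqnorm_eq_0_imp[of k w] by (auto simp: w_def)
  then have s_pos: "0 < sqnorm k w"
    using sqnorm_nonneg[of k w] by linarith
  have "sqnorm k w = sqnorm k e - 2 * (\<Sum>j<k. kron 0 j * e j) + (\<Sum>j<k. kron 0 j * kron 0 j)"
    unfolding sqnorm_def w_def
    by (simp add: power2_diff sum.distrib sum_subtractf sum_distrib_left algebra_simps power2_eq_square)
  then have s: "sqnorm k w = 2 - 2 * e 0"
    using assms by simp
  show ?thesis
  proof (rule that[OF orthonormal_columns_reflection[OF s_pos]])
    fix j assume "j < k"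
    have "w 0 = e 0 - 1"
      by (simp add: w_def kron_def)
    moreover have "2 - 2 * e 0 \<noteq> 0"
      using s s_pos by simp
    ultimately show "kron 0 j - 2 * w 0 * w j / sqnorm k w = e j"
      unfolding s by (simp add: w_def field_simps)
  qed
qed

definition stretch_first :: "real \<Rightarrow> nat \<Rightarrow> nat \<Rightarrow> real" where
  "stretch_first t i j = (if i = j then if i = 0 then 1 + t else 1 else 0)"

lemma mat_det_stretch_first: "0 < k \<Longrightarrow> mat_det k (stretch_first t) = 1 + t"
proof -
  assume "0 < k"
  have "mat k k (\<lambda>(i, j). stretch_first t i j) = multrow_mat k 0 (1 + t)"
    by (rule eq_matI) (auto simp: multrow_mat_def stretch_first_def)
  then show ?thesis
    unfolding mat_det_def using det_multrow_mat[OF \<open>0 < k\<close>] by simp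
qed

lemma sqnorm_mat_vec_stretch_first:
  assumes "0 < k"
  shows "sqnorm k (mat_vec k (stretch_first t) z) = sqnorm k z + ((1 + t)\<^sup>2 - 1) * (z 0)\<^sup>2"
proof -
  obtain k' where k': "k = Suc k'"
    using assms not0_implies_Suc by blast
  have "mat_vec k (stretch_first t) z i = (if i = 0 then 1 + t else 1) * z i" if "i < k" for i
  proof -
    have "mat_vec k (stretch_first t) z i = (\<Sum>j<k. if i = j then (if i = 0 then 1 + t else 1) * z j else 0)"
      unfolding mat_vec_def stretch_first_def by (rule sum.cong) auto
    then show ?thesis
      using that by simp
  qed
  then have "sqnorm k (mat_vec k (stretch_first t) z) = (\<Sum>i<k. ((if i = 0 then 1 + t else 1) * z i)\<^sup>2)"
    unfolding sqnorm_def by (intro sum.cong) auto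
  also have "\<dots> = ((1 + t) * z 0)\<^sup>2 + (\<Sum>i<k'. (z (Suc i))\<^sup>2)"
    unfolding k' by (simp add: sum.lessThan_Suc_shift del: sum.lessThan_Suc)
  moreover have "sqnorm k z = (z 0)\<^sup>2 + (\<Sum>i<k'. (z (Suc i))\<^sup>2)"
    unfolding sqnorm_def k' by (simp add: sum.lessThan_Suc_shift del: sum.lessThan_Suc)
  ultimately show ?thesis
    by (simp add: power2_eq_square algebra_simps)
qed

text \<open>Rotating \<open>e\<close> to the first axis and stretching that axis by \<open>1 + t\<close>.\<close>

lemma sqnorm_stretch_direction:
  assumes "0 < k" and "orthonormal_columns k Q" and "\<And>j. j < k \<Longrightarrow> Q 0 j = e j"
  shows "sqnorm k (mat_vec k (mat_mul k (stretch_first t) Q) v) = sqnorm k v + (2 * t + t\<^sup>2) * (dot k e v)\<^sup>2"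
proof -
  have "mat_vec k Q v 0 = dot k e v"
    unfolding mat_vec_def dot_def using assms(1,3) by (intro sum.cong) auto
  then show ?thesis
    unfolding mat_vec_mat_mul sqnorm_mat_vec_stretch_first[OF assms(1)]
      sqnorm_mat_vec_orthonormal_columns[OF assms(2)]
    by (simp add: power2_eq_square algebra_simps)
qed


lemma ln_sqnorm_stretch_direction_le:
  assumes "0 < k" and "orthonormal_columns k Q" and "\<And>j. j < k \<Longrightarrow> Q 0 j = e j"
    and "0 < sqnorm k v" and "0 \<le> t"
  shows "ln (sqnorm k (mat_vec k (mat_mul k (stretch_first t) Q) v))
    \<le> ln (sqnorm k v) + (2 * t + t\<^sup>2) * ((dot k e v)\<^sup>2 / sqnorm k v)"
proof -
  define c where "c = (dot k e v)\<^sup>2 / sqnorm k v"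
  have "0 \<le> c"
    by (simp add: c_def)
  have "sqnorm k (mat_vec k (mat_mul k (stretch_first t) Q) v) = sqnorm k v * (1 + (2 * t + t\<^sup>2) * c)"
    using sqnorm_stretch_direction[OF assms(1-3)] assms(4) by (simp add: c_def field_simps)
  moreover have "0 < 1 + (2 * t + t\<^sup>2) * c"
    using \<open>0 \<le> c\<close> assms(5) by (simp add: add_pos_nonneg)
  moreover have "ln (1 + (2 * t + t\<^sup>2) * c) \<le> (2 * t + t\<^sup>2) * c"
    using \<open>0 \<le> c\<close> assms(5) by (intro ln_add_one_self_le_self) simp
  ultimately show ?thesis
    using assms(4) by (simp add: ln_mult_pos c_def)
qed

definition window :: "nat \<Rightarrow> nat \<Rightarrow> nat \<Rightarrow> nat" where
  "window m t i = (t + i) mod m"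

lemma add_mod_cancel_left_less:
  fixes m :: nat
  assumes "i < m" and "j < m" and "(t + i) mod m = (t + j) mod m"
  shows "i = j"
proof -
  have False if "a < b" "b < m" "(t + a) mod m = (t + b) mod m" for a b
  proof -
    have "m dvd (t + b) - (t + a)"
      using mod_eq_dvd_iff_nat[of "t + a" "t + b" m] that by simp
    then have "m dvd b - a"
      by simp
    moreover have "0 < b - a" "b - a < m"
      using that by auto
    ultimately show False
      using nat_dvd_not_less by blast
  qed
  then show ?thesis
    using assms by (metis linorder_neqE_nat)
qed

lemma sum_rotate:
  fixes h :: "nat \<Rightarrow> 'a :: comm_monoid_add"
  assumes "0 < m"
  shows "(\<Sum>t<m. h ((t + i) mod m)) = (\<Sum>t<m. h t)"
proof -
  have inj: "inj_on (\<lambda>t. (t + i) mod m) {..<m}"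
  proof (rule inj_onI)
    fix s t assume "s \<in> {..<m}" "t \<in> {..<m}" "(s + i) mod m = (t + i) mod m"
    then have "s < m" "t < m" "(i + s) mod m = (i + t) mod m"
      by (simp_all only: lessThan_iff add.commute)
    then show "s = t"
      by (rule add_mod_cancel_left_less)
  qed
  have "(\<lambda>t. (t + i) mod m) ` {..<m} = {..<m}"
    using inj assms by (intro endo_inj_surj) auto
  then show ?thesis
    using sum.reindex[OF inj, of h] by simp
qed

lemma sum_window:
  fixes h :: "nat \<Rightarrow> real"
  assumes "0 < m"
  shows "(\<Sum>t<m. \<Sum>i<k. h (window m t i)) = real k * (\<Sum>x<m. h x)"
proof -
  have "(\<Sum>t<m. \<Sum>i<k. h (window m t i)) = (\<Sum>i<k. \<Sum>t<m. h ((t + i) mod m))"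
    unfolding window_def by (rule sum.swap)
  also have "\<dots> = (\<Sum>i<k. \<Sum>x<m. h x)"
    by (intro sum.cong refl sum_rotate[OF assms])
  finally show ?thesis
    by simp
qed

text \<open>The cyclic windows \<open>u x, u (x + 1), \<dots>, u (x + k - 1)\<close> (indices mod \<open>m\<close>) are
  bases; this is the general position needed to bound the potential below.\<close>

definition windows_nonsingular :: "nat \<Rightarrow> nat \<Rightarrow> (nat \<Rightarrow> nat \<Rightarrow> real) \<Rightarrow> bool" where
  "windows_nonsingular k m u \<longleftrightarrow> (\<forall>t<m. mat_det k (\<lambda>i. u (window m t i)) \<noteq> 0)"

lemma sqnorm_mat_vec_pos:
  assumes "windows_nonsingular k m u" and "mat_det k A \<noteq> 0" and "x < m" and "0 < k"
  shows "0 < sqnorm k (mat_vec k A (u x))"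
proof -
  have "mat_det k (\<lambda>i. mat_vec k A (u (window m x i))) \<noteq> 0"
    using assms(1-3) unfolding windows_nonsingular_def mat_det_rows_mat_vec by simp
  then have "0 < sqnorm k (mat_vec k A (u (window m x 0)))"
    using \<open>0 < k\<close> by (rule sqnorm_row_pos)
  then show ?thesis
    using \<open>x < m\<close> by (simp add: window_def)
qed

text \<open>Forster's potential: lowering it stretches the normalized vectors \<open>A u x\<close> towards
  isotropic position.\<close>

definition potential :: "nat \<Rightarrow> nat \<Rightarrow> (nat \<Rightarrow> nat \<Rightarrow> real) \<Rightarrow> (nat \<Rightarrow> nat \<Rightarrow> real) \<Rightarrow> real" where
  "potential k m u A =
    (\<Sum>x<m. ln (sqnorm k (mat_vec k A (u x)))) - 2 * real m / real k * ln \<bar>mat_det k A\<bar>"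

definition frame_form :: "nat \<Rightarrow> nat \<Rightarrow> (nat \<Rightarrow> nat \<Rightarrow> real) \<Rightarrow> (nat \<Rightarrow> real) \<Rightarrow> real" where
  "frame_form k m U z = (\<Sum>x<m. (dot k z (U x))\<^sup>2 / sqnorm k (U x))"

lemma frame_form_unitize: "frame_form k m U (unitize k z) = frame_form k m U z / sqnorm k z"
proof (cases "sqnorm k z = 0")
  case True
  then show ?thesis
    by (simp add: frame_form_def dot_unitize_left)
next
  case False
  then show ?thesis
    using sqnorm_nonneg[of k z]
    by (simp add: frame_form_def dot_unitize_left power_divide sum_divide_distrib field_simps)
qed

lemma potential_bdd_below:
  assumes "0 < k" and "0 < m" and gp: "windows_nonsingular k m u"
  shows "bdd_below (potential k m u ` {A. mat_det k A \<noteq> 0})"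
proof -
  define S where "S = (\<Sum>t<m. ln \<bar>mat_det k (\<lambda>i. u (window m t i))\<bar>)"
  define C where "C = 2 / real k * (S - real m * ln (fact k))"
  have "C \<le> potential k m u A" if A: "mat_det k A \<noteq> 0" for A
  proof -
    define L where "L x = ln (sqnorm k (mat_vec k A (u x)))" for x
    have window: "ln \<bar>mat_det k (\<lambda>i. u (window m t i))\<bar> + ln \<bar>mat_det k A\<bar>
        \<le> ln (fact k) + (\<Sum>i<k. L (window m t i) / 2)" if "t < m" for t
    proof -
      have nz: "mat_det k (\<lambda>i. mat_vec k A (u (window m t i))) \<noteq> 0"
        using gp A that unfolding windows_nonsingular_def mat_det_rows_mat_vec by simp
      then have "ln \<bar>mat_det k (\<lambda>i. u (window m t i))\<bar> + ln \<bar>mat_det k A\<bar>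
          = ln \<bar>mat_det k (\<lambda>i. mat_vec k A (u (window m t i)))\<bar>"
        unfolding mat_det_rows_mat_vec by (simp add: abs_mult ln_mult)
      also have "\<dots> \<le> ln (fact k) + (\<Sum>i<k. L (window m t i) / 2)"
        unfolding L_def using nz by (rule ln_abs_mat_det_le)
      finally show ?thesis .
    qed
    have "(\<Sum>t<m. ln \<bar>mat_det k (\<lambda>i. u (window m t i))\<bar> + ln \<bar>mat_det k A\<bar>)
        \<le> (\<Sum>t<m. ln (fact k) + (\<Sum>i<k. L (window m t i) / 2))"
      using window by (intro sum_mono) auto
    then have "S + real m * ln \<bar>mat_det k A\<bar> \<le> real m * ln (fact k) + (\<Sum>t<m. \<Sum>i<k. L (window m t i) / 2)"
      by (simp add: S_def sum.distrib)
    moreover have "2 * (\<Sum>t<m. \<Sum>i<k. L (window m t i) / 2) = real k * (\<Sum>x<m. L x)"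
      using sum_window[OF \<open>0 < m\<close>, where k = k and h = "\<lambda>x. L x / 2"]
      by (simp add: sum_divide_distrib[symmetric])
    ultimately have "2 * S - 2 * real m * ln (fact k) \<le> real k * (\<Sum>x<m. L x) - 2 * real m * ln \<bar>mat_det k A\<bar>"
      by linarith
    then have "(2 * S - 2 * real m * ln (fact k)) / real k
        \<le> (real k * (\<Sum>x<m. L x) - 2 * real m * ln \<bar>mat_det k A\<bar>) / real k"
      using \<open>0 < k\<close> by (intro divide_right_mono) auto
    then show ?thesis
      using \<open>0 < k\<close> unfolding potential_def C_def L_def by (simp add: field_simps)
  qed
  then show ?thesis
    unfolding bdd_below_def by blast
qed

lemma stretch_gain:
  fixes t B M \<epsilon> c :: real
  assumes "B \<le> M - \<epsilon>" and "0 \<le> M" and "M \<le> c" and "0 < t" and "3 * c * t \<le> \<epsilon>" and "0 < \<epsilon>"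
  shows "(2 * t + t\<^sup>2) * B - 2 * M * (t - t\<^sup>2) \<le> - (t * \<epsilon>)"
proof -
  have "(2 * t + t\<^sup>2) * B \<le> (2 * t + t\<^sup>2) * (M - \<epsilon>)"
    using assms by (intro mult_left_mono) auto
  moreover have "3 * t\<^sup>2 * M \<le> t * \<epsilon>"
  proof -
    have "3 * t\<^sup>2 * M \<le> t * (3 * c * t)"
      using assms by (simp add: power2_eq_square mult_left_mono)
    also have "\<dots> \<le> t * \<epsilon>"
      using assms by (intro mult_left_mono) auto
    finally show ?thesis .
  qed
  moreover have "0 \<le> t\<^sup>2 * \<epsilon>"
    using assms by simp
  ultimately show ?thesis
    by (simp add: algebra_simps power2_eq_square)
qed

lemma potential_decrease:
  assumes "0 < k" and "0 < m" and gp: "windows_nonsingular k m u" and A: "mat_det k A \<noteq> 0"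
    and e: "sqnorm k e = 1" and "0 < \<epsilon>"
    and small: "frame_form k m (\<lambda>x. mat_vec k A (u x)) e \<le> real m / real k - \<epsilon>"
  obtains A' where "mat_det k A' \<noteq> 0"
    and "potential k m u A' \<le> potential k m u A - min 1 (\<epsilon> / (3 * real m)) * \<epsilon>"
proof -
  define t where "t = min 1 (\<epsilon> / (3 * real m))"
  have t_le: "t \<le> \<epsilon> / (3 * real m)"
    by (simp add: t_def)
  have "0 < t" "t \<le> 1"
    using \<open>0 < \<epsilon>\<close> \<open>0 < m\<close> by (auto simp: t_def)
  moreover have "3 * real m * t \<le> \<epsilon>"
    using \<open>0 < m\<close> t_le by (simp add: field_simps)
  ultimately have t: "0 < t" "t \<le> 1" "3 * real m * t \<le> \<epsilon>"
    by blast+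
  obtain Q where Q: "orthonormal_columns k Q" "\<And>j. j < k \<Longrightarrow> Q 0 j = e j"
    using ex_orthonormal_columns_first_row[OF \<open>0 < k\<close> e] by blast
  define A' where "A' = mat_mul k (mat_mul k (stretch_first t) Q) A"
  define K where "K = 2 * real m / real k"
  have det: "\<bar>mat_det k A'\<bar> = (1 + t) * \<bar>mat_det k A\<bar>"
    using t abs_mat_det_orthonormal_columns[OF Q(1)]
    by (simp add: A'_def mat_det_mat_mul mat_det_stretch_first[OF \<open>0 < k\<close>] abs_mult)
  then have "mat_det k A' \<noteq> 0"
    using A t by auto
  have pointwise: "ln (sqnorm k (mat_vec k A' (u x)))
      \<le> ln (sqnorm k (mat_vec k A (u x))) + (2 * t + t\<^sup>2) * ((dot k e (mat_vec k A (u x)))\<^sup>2 / sqnorm k (mat_vec k A (u x)))"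
    if "x < m" for x
    unfolding A'_def mat_vec_mat_mul[of k "mat_mul k (stretch_first t) Q"]
    using \<open>0 < k\<close> Q sqnorm_mat_vec_pos[OF gp A that \<open>0 < k\<close>] t(1)
    by (intro ln_sqnorm_stretch_direction_le) auto
  have "(\<Sum>x<m. ln (sqnorm k (mat_vec k A' (u x))))
      \<le> (\<Sum>x<m. ln (sqnorm k (mat_vec k A (u x)))
          + (2 * t + t\<^sup>2) * ((dot k e (mat_vec k A (u x)))\<^sup>2 / sqnorm k (mat_vec k A (u x))))"
    using pointwise by (intro sum_mono) auto
  then have "(\<Sum>x<m. ln (sqnorm k (mat_vec k A' (u x))))
      \<le> (\<Sum>x<m. ln (sqnorm k (mat_vec k A (u x)))) + (2 * t + t\<^sup>2) * frame_form k m (\<lambda>x. mat_vec k A (u x)) e"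
    by (simp add: frame_form_def sum.distrib sum_distrib_left)
  moreover have "K * (t - t\<^sup>2) + K * ln \<bar>mat_det k A\<bar> \<le> K * ln \<bar>mat_det k A'\<bar>"
  proof -
    have "t - t\<^sup>2 + ln \<bar>mat_det k A\<bar> \<le> ln \<bar>mat_det k A'\<bar>"
      using det A t ln_one_plus_pos_lower_bound[of t] by (simp add: ln_mult_pos)
    then have "K * (t - t\<^sup>2 + ln \<bar>mat_det k A\<bar>) \<le> K * ln \<bar>mat_det k A'\<bar>"
      by (rule mult_left_mono) (simp add: K_def)
    then show ?thesis
      by (simp add: distrib_left)
  qed
  moreover have "(2 * t + t\<^sup>2) * frame_form k m (\<lambda>x. mat_vec k A (u x)) e - K * (t - t\<^sup>2) \<le> - (t * \<epsilon>)"
    unfolding K_def using stretch_gain[OF small _ _ t(1) _ \<open>0 < \<epsilon>\<close>, of "real m"] t(3) \<open>0 < k\<close>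
    by (simp add: divide_le_eq mult_le_cancel_left1)
  ultimately have "potential k m u A' \<le> potential k m u A - t * \<epsilon>"
    unfolding potential_def K_def[symmetric] by linarith
  then show ?thesis
    using that \<open>mat_det k A' \<noteq> 0\<close> unfolding t_def by blast
qed

text \<open>An almost minimizer of the potential is almost isotropic: otherwise
  \<open>potential_decrease\<close> would push the potential below its infimum.\<close>

lemma ex_approx_isotropic:
  assumes "0 < k" and "0 < m" and gp: "windows_nonsingular k m u" and "0 < \<epsilon>"
  obtains A where "mat_det k A \<noteq> 0"
    and "\<And>z. (real m / real k - \<epsilon>) * sqnorm k z \<le> frame_form k m (\<lambda>x. mat_vec k A (u x)) z"
proof -
  define gain where "gain = min 1 (\<epsilon> / (3 * real m)) * \<epsilon>"
  define S where "S = potential k m u ` {A. mat_det k A \<noteq> 0}"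
  have gain_pos: "0 < gain"
    using \<open>0 < \<epsilon>\<close> \<open>0 < m\<close> by (simp add: gain_def)
  have bdd: "bdd_below S"
    unfolding S_def using potential_bdd_below[OF \<open>0 < k\<close> \<open>0 < m\<close> gp] .
  have "potential k m u kron \<in> S"
    unfolding S_def by simp
  then obtain A where A: "mat_det k A \<noteq> 0" and near_inf: "potential k m u A < Inf S + gain"
    using cInf_less_iff[OF _ bdd, of "Inf S + gain"] gain_pos unfolding S_def by force
  have "(real m / real k - \<epsilon>) * sqnorm k z \<le> frame_form k m (\<lambda>x. mat_vec k A (u x)) z" for z
  proof (rule ccontr)
    assume less: "\<not> ?thesis"
    then have "sqnorm k z \<noteq> 0"
      by (auto simp: frame_form_def dot_eq_0_if_sqnorm_eq_0)
    then have z_pos: "0 < sqnorm k z"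
      using sqnorm_nonneg[of k z] by linarith
    have "frame_form k m (\<lambda>x. mat_vec k A (u x)) (unitize k z) \<le> real m / real k - \<epsilon>"
      using less z_pos by (simp add: frame_form_unitize divide_le_eq)
    then obtain A' where "mat_det k A' \<noteq> 0" "potential k m u A' \<le> potential k m u A - gain"
      using potential_decrease[OF \<open>0 < k\<close> \<open>0 < m\<close> gp A sqnorm_unitize[OF z_pos] \<open>0 < \<epsilon>\<close>]
      unfolding gain_def by blast
    moreover have "Inf S \<le> potential k m u A'"
      using \<open>mat_det k A' \<noteq> 0\<close> bdd unfolding S_def by (intro cInf_lower) auto
    ultimately show False
      using near_inf by simp
  qed
  then show ?thesis
    using that A by blast
qed

section \<open>General position by perturbation\<close>

lemma mat_det_vandermonde_nonzero:
  fixes \<tau> :: "nat \<Rightarrow> real"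
  assumes inj: "inj_on \<tau> {..<k}"
  shows "mat_det k (\<lambda>i j. \<tau> i ^ j) \<noteq> 0"
proof
  assume "mat_det k (\<lambda>i j. \<tau> i ^ j) = 0"
  then obtain v where v: "v \<in> carrier_vec k" "v \<noteq> 0\<^sub>v k" "mat k k (\<lambda>(i, j). \<tau> i ^ j) *\<^sub>v v = 0\<^sub>v k"
    using det_0_iff_vec_prod_zero_field[of "mat k k (\<lambda>(i, j). \<tau> i ^ j)" k] unfolding mat_det_def by auto
  define P where "P = (\<Sum>j<k. monom (v $ j) j)"
  have coeff_P: "coeff P n = (if n < k then v $ n else 0)" for n
    unfolding P_def coeff_sum by (simp add: coeff_monom)
  have "P \<noteq> 0"
  proof
    assume "P = 0"
    then have "v = 0\<^sub>v k"
      using coeff_P v(1) by (intro eq_vecI) (auto, metis coeff_0)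
    then show False
      using v(2) by simp
  qed
  have "poly P (\<tau> i) = 0" if "i < k" for i
  proof -
    have "(mat k k (\<lambda>(i, j). \<tau> i ^ j) *\<^sub>v v) $ i = 0"
      using v(3) that by simp
    then show ?thesis
      using that v(1) unfolding P_def poly_sum poly_monom
      by (simp add: scalar_prod_def atLeast0LessThan mult.commute)
  qed
  then have "\<tau> ` {..<k} \<subseteq> {x. poly P x = 0}"
    by auto
  then have "card (\<tau> ` {..<k}) \<le> card {x. poly P x = 0}"
    using poly_roots_finite[OF \<open>P \<noteq> 0\<close>] by (intro card_mono)
  then have "k \<le> card {x. poly P x = 0}"
    using card_image[OF inj] by simp
  also have "\<dots> \<le> degree P"
    by (rule card_poly_roots_bound[OF \<open>P \<noteq> 0\<close>])
  also have "degree P < k"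
  proof -
    have "k \<noteq> 0"
      using \<open>P \<noteq> 0\<close> by (rule contrapos_nn) (simp add: P_def)
    then show ?thesis
      using degree_le[of "k - 1" P] coeff_P by fastforce
  qed
  finally show False
    by simp
qed

lemma mat_det_linear_pencil: "\<exists>p. \<forall>S. mat_det k (\<lambda>i j. S * U i j + Q i j) = poly p S"
proof (intro exI allI)
  fix S
  show "mat_det k (\<lambda>i j. S * U i j + Q i j)
      = poly (\<Sum>\<pi> | \<pi> permutes {..<k}. of_int (sign \<pi>) * (\<Prod>i<k. [: Q i (\<pi> i), U i (\<pi> i) :])) S"
    unfolding mat_det_expand poly_sum poly_mult poly_prod by (simp add: algebra_simps)
qed

lemma finite_singular_perturbations:
  assumes "k \<le> m"
  shows "finite {S. \<not> windows_nonsingular k m (\<lambda>x j. S * u x j + real x ^ j)}"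
proof -
  have "finite {S. mat_det k (\<lambda>i j. S * u (window m t i) j + real (window m t i) ^ j) = 0}" if "t < m" for t
  proof -
    have "\<exists>p. \<forall>S. mat_det k (\<lambda>i j. S * u (window m t i) j + real (window m t i) ^ j) = poly p S"
      by (rule mat_det_linear_pencil)
    then obtain p where p: "\<forall>S. mat_det k (\<lambda>i j. S * u (window m t i) j + real (window m t i) ^ j) = poly p S"
      by blast
    have "inj_on (\<lambda>i. real (window m t i)) {..<k}"
    proof (rule inj_onI)
      fix i j assume "i \<in> {..<k}" "j \<in> {..<k}" "real (window m t i) = real (window m t j)"
      then show "i = j"
        using assms \<open>t < m\<close> add_mod_cancel_left_less[of i m j t] by (simp add: window_def)
    qed
    then have "mat_det k (\<lambda>i j. real (window m t i) ^ j) \<noteq> 0"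
      by (rule mat_det_vandermonde_nonzero)
    then have "poly p 0 \<noteq> 0"
      using p[rule_format, of 0] by simp
    then show ?thesis
      unfolding p[rule_format] by (intro poly_roots_finite) auto
  qed
  moreover have "{S. \<not> windows_nonsingular k m (\<lambda>x j. S * u x j + real x ^ j)}
      = (\<Union>t<m. {S. mat_det k (\<lambda>i j. S * u (window m t i) j + real (window m t i) ^ j) = 0})"
    by (auto simp: windows_nonsingular_def)
  ultimately show ?thesis
    by simp
qed

definition sign_rep ::
    "nat \<Rightarrow> nat \<Rightarrow> nat \<Rightarrow> (nat \<Rightarrow> nat \<Rightarrow> real) \<Rightarrow> (nat \<Rightarrow> nat \<Rightarrow> real) \<Rightarrow> (nat \<Rightarrow> nat \<Rightarrow> real) \<Rightarrow> bool" where
  "sign_rep k m m' s u v \<longleftrightarrow> (\<forall>x<m. \<forall>y<m'. 0 < s x y * dot k (u x) (v y))"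

lemma sign_rep_perturb:
  assumes sgn: "sign_rep k m m' s u v" and s1: "\<And>x y. x < m \<Longrightarrow> y < m' \<Longrightarrow> \<bar>s x y\<bar> = 1"
  obtains d where "0 < d" and "\<And>e. 0 < e \<Longrightarrow> e < d \<Longrightarrow> sign_rep k m m' s (\<lambda>x j. u x j + e * q x j) v"
proof -
  define margin where "margin x y = s x y * dot k (u x) (v y) / (\<bar>dot k (q x) (v y)\<bar> + 1)" for x y
  define d where "d = Min (insert 1 ((\<lambda>(x, y). margin x y) ` ({..<m} \<times> {..<m'})))"
  have "0 < d"
    using sgn unfolding d_def sign_rep_def margin_def by (auto intro!: divide_pos_pos)
  moreover have "sign_rep k m m' s (\<lambda>x j. u x j + e * q x j) v" if "0 < e" "e < d" for e
    unfolding sign_rep_def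
  proof (intro allI impI)
    fix x y assume "x < m" "y < m'"
    have "d \<le> margin x y"
      unfolding d_def using \<open>x < m\<close> \<open>y < m'\<close> by (intro Min_le) auto
    have pos: "0 < \<bar>dot k (q x) (v y)\<bar> + 1"
      by (simp add: add_nonneg_pos)
    have "e * \<bar>dot k (q x) (v y)\<bar> < e * (\<bar>dot k (q x) (v y)\<bar> + 1)"
      using \<open>0 < e\<close> by simp
    also have "\<dots> < margin x y * (\<bar>dot k (q x) (v y)\<bar> + 1)"
      using \<open>e < d\<close> \<open>d \<le> margin x y\<close> pos by (intro mult_strict_right_mono) auto
    also have "\<dots> = s x y * dot k (u x) (v y)"
      unfolding margin_def using pos by simp
    finally have "e * \<bar>dot k (q x) (v y)\<bar> < s x y * dot k (u x) (v y)" .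
    moreover have "- (e * \<bar>dot k (q x) (v y)\<bar>) \<le> e * (s x y * dot k (q x) (v y))"
    proof -
      have "- \<bar>dot k (q x) (v y)\<bar> \<le> s x y * dot k (q x) (v y)"
        using s1[OF \<open>x < m\<close> \<open>y < m'\<close>] abs_ge_minus_self[of "s x y * dot k (q x) (v y)"]
        by (simp add: abs_mult)
      then show ?thesis
        using mult_left_mono[of _ _ e] \<open>0 < e\<close> by fastforce
    qed
    ultimately show "0 < s x y * dot k (\<lambda>j. u x j + e * q x j) (v y)"
      by (simp add: dot_add_scale_left algebra_simps)
  qed
  ultimately show ?thesis
    using that by blast
qed

lemma ex_windows_nonsingular_sign_rep:
  assumes "k \<le> m" and sgn: "sign_rep k m m' s u v" and s1: "\<And>x y. x < m \<Longrightarrow> y < m' \<Longrightarrow> \<bar>s x y\<bar> = 1"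
  obtains u' where "windows_nonsingular k m u'" and "sign_rep k m m' s u' v"
proof -
  define q where "q x j = real x ^ j" for x j :: nat
  obtain d where "0 < d" and d: "\<And>e. 0 < e \<Longrightarrow> e < d \<Longrightarrow> sign_rep k m m' s (\<lambda>x j. u x j + e * q x j) v"
    using sign_rep_perturb[OF sgn s1] by blast
  define Bad where "Bad = {S. \<not> windows_nonsingular k m (\<lambda>x j. S * u x j + real x ^ j)}"
  define S where "S = Max (insert (1 / d) Bad) + 1"
  have "finite Bad"
    unfolding Bad_def using finite_singular_perturbations[OF \<open>k \<le> m\<close>] .
  then have "1 / d \<le> Max (insert (1 / d) Bad)" "\<And>b. b \<in> Bad \<Longrightarrow> b \<le> Max (insert (1 / d) Bad)"
    by (simp_all add: Max_ge)
  then have "1 / d < S" "S \<notin> Bad"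
    unfolding S_def by (linarith, fastforce)
  moreover have "0 < 1 / d"
    using \<open>0 < d\<close> by simp
  ultimately have S_pos: "0 < S"
    by linarith
  have e_small: "1 / S < d"
    using \<open>0 < d\<close> S_pos \<open>1 / d < S\<close> by (simp add: divide_less_eq mult.commute)
  have "windows_nonsingular k m (\<lambda>x j. u x j + 1 / S * q x j)"
    unfolding windows_nonsingular_def
  proof (intro allI impI)
    fix t assume "t < m"
    have rescale: "(\<lambda>i j. u (window m t i) j + 1 / S * q (window m t i) j)
        = (\<lambda>i j. 1 / S * (S * u (window m t i) j + real (window m t i) ^ j))"
      using S_pos by (intro ext) (simp add: q_def field_simps)
    have "mat_det k (\<lambda>i j. u (window m t i) j + 1 / S * q (window m t i) j)
        = (1 / S) ^ k * mat_det k (\<lambda>i j. S * u (window m t i) j + real (window m t i) ^ j)"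
      unfolding rescale by (rule mat_det_scale)
    moreover have "mat_det k (\<lambda>i j. S * u (window m t i) j + real (window m t i) ^ j) \<noteq> 0"
      using \<open>S \<notin> Bad\<close> \<open>t < m\<close> unfolding Bad_def windows_nonsingular_def by simp
    ultimately show "mat_det k (\<lambda>i. \<lambda>j. u (window m t i) j + 1 / S * q (window m t i) j) \<noteq> 0"
      using S_pos by simp
  qed
  moreover have "sign_rep k m m' s (\<lambda>x j. u x j + 1 / S * q x j) v"
    using d[of "1 / S"] S_pos e_small by simp
  ultimately show ?thesis
    using that by blast
qed

section \<open>Forster's theorem\<close>

lemma sum_mult_le_sqrt:
  fixes f g :: "'a \<Rightarrow> real"
  shows "(\<Sum>i\<in>I. f i * g i) \<le> sqrt (\<Sum>i\<in>I. (f i)\<^sup>2) * sqrt (\<Sum>i\<in>I. (g i)\<^sup>2)"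
proof -
  have "(\<Sum>i\<in>I. f i * g i) \<le> sqrt ((\<Sum>i\<in>I. f i * g i)\<^sup>2)"
    by simp
  also have "\<dots> \<le> sqrt ((\<Sum>i\<in>I. (f i)\<^sup>2) * (\<Sum>i\<in>I. (g i)\<^sup>2))"
    by (rule real_sqrt_le_mono[OF Cauchy_Schwarz_ineq_sum])
  finally show ?thesis
    by (simp add: real_sqrt_mult)
qed

lemma sum_sign_dot_le:
  fixes s U Z :: "nat \<Rightarrow> nat \<Rightarrow> real"
  assumes "0 \<le> \<sigma>"
    and bound: "\<And>a b. (\<Sum>x<m. \<Sum>y<m'. s x y * a x * b y) \<le> \<sigma> * sqrt (\<Sum>x<m. (a x)\<^sup>2) * sqrt (\<Sum>y<m'. (b y)\<^sup>2)"
    and U: "\<And>x. x < m \<Longrightarrow> sqnorm k (U x) = 1" and Z: "\<And>y. y < m' \<Longrightarrow> sqnorm k (Z y) = 1"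
  shows "(\<Sum>x<m. \<Sum>y<m'. s x y * dot k (U x) (Z y)) \<le> \<sigma> * (sqrt (real m) * sqrt (real m'))"
proof -
  define a where "a j = (\<Sum>x<m. (U x j)\<^sup>2)" for j
  define b where "b j = (\<Sum>y<m'. (Z y j)\<^sup>2)" for j
  have "(\<Sum>x<m. \<Sum>y<m'. s x y * dot k (U x) (Z y)) = (\<Sum>j<k. \<Sum>x<m. \<Sum>y<m'. s x y * U x j * Z y j)"
    unfolding dot_def by (simp add: sum_distrib_left mult.assoc sum.swap[of _ "{..<k}"])
  also have "\<dots> \<le> (\<Sum>j<k. \<sigma> * (sqrt (a j) * sqrt (b j)))"
    unfolding a_def b_def by (intro sum_mono) (use bound in \<open>simp add: mult.assoc\<close>)
  also have "\<dots> = \<sigma> * (\<Sum>j<k. sqrt (a j) * sqrt (b j))"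
    by (simp add: sum_distrib_left)
  also have "\<dots> \<le> \<sigma> * (sqrt (\<Sum>j<k. a j) * sqrt (\<Sum>j<k. b j))"
    using sum_mult_le_sqrt[of "\<lambda>j. sqrt (a j)" "\<lambda>j. sqrt (b j)" "{..<k}"] \<open>0 \<le> \<sigma>\<close>
    by (intro mult_left_mono) (simp_all add: a_def b_def sum_nonneg)
  also have "(\<Sum>j<k. a j) = (\<Sum>x<m. sqnorm k (U x))"
    unfolding a_def sqnorm_def by (rule sum.swap)
  also have "\<dots> = real m"
    using U by simp
  also have "(\<Sum>j<k. b j) = (\<Sum>y<m'. sqnorm k (Z y))"
    unfolding b_def sqnorm_def by (rule sum.swap)
  also have "\<dots> = real m'"
    using Z by simp
  finally show ?thesis .
qed

lemma forster_isotropic: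
  fixes s U Z :: "nat \<Rightarrow> nat \<Rightarrow> real"
  assumes U: "\<And>x. x < m \<Longrightarrow> 0 < sqnorm k (U x)" and Z: "\<And>y. y < m' \<Longrightarrow> 0 < sqnorm k (Z y)"
    and sgn: "sign_rep k m m' s U Z" and s1: "\<And>x y. x < m \<Longrightarrow> y < m' \<Longrightarrow> \<bar>s x y\<bar> = 1"
    and iso: "\<And>z. c * sqnorm k z \<le> frame_form k m U z"
    and "0 \<le> \<sigma>"
    and bound: "\<And>a b. (\<Sum>x<m. \<Sum>y<m'. s x y * a x * b y) \<le> \<sigma> * sqrt (\<Sum>x<m. (a x)\<^sup>2) * sqrt (\<Sum>y<m'. (b y)\<^sup>2)"
  shows "real m' * c \<le> \<sigma> * (sqrt (real m) * sqrt (real m'))"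
proof -
  define r where "r x y = dot k (unitize k (U x)) (unitize k (Z y))" for x y
  have r_eq: "r x y = dot k (U x) (Z y) / (sqrt (sqnorm k (U x)) * sqrt (sqnorm k (Z y)))" for x y
    unfolding r_def dot_unitize_left dot_unitize_right by simp
  have sign: "s x y * r x y = \<bar>r x y\<bar>" if "x < m" "y < m'" for x y
  proof -
    have "0 < s x y * dot k (U x) (Z y)"
      using sgn that unfolding sign_rep_def by blast
    then have "0 < s x y * r x y"
      unfolding r_eq using U[OF that(1)] Z[OF that(2)] by (simp add: mult.assoc[symmetric])
    moreover have "\<bar>s x y * r x y\<bar> = \<bar>r x y\<bar>"
      using s1[OF that] by (simp add: abs_mult)
    ultimately show ?thesis
      by simp
  qed
  have r_sq: "(r x y)\<^sup>2 \<le> \<bar>r x y\<bar>" if "x < m" "y < m'" for x y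
    unfolding r_def using U[OF that(1)] Z[OF that(2)] by (rule sq_dot_unitize_le_abs)
  have column: "c \<le> (\<Sum>x<m. s x y * r x y)" if "y < m'" for y
  proof -
    have "c = c * sqnorm k (unitize k (Z y))"
      using Z[OF that] by (simp add: sqnorm_unitize)
    also have "\<dots> \<le> frame_form k m U (unitize k (Z y))"
      by (rule iso)
    also have "\<dots> = (\<Sum>x<m. (r x y)\<^sup>2)"
      unfolding frame_form_def r_def dot_unitize_left dot_unitize_right
      using U Z[OF that] by (intro sum.cong refl) (simp add: dot_commute power_divide power_mult_distrib)
    also have "\<dots> \<le> (\<Sum>x<m. s x y * r x y)"
      using r_sq sign that by (intro sum_mono) auto
    finally show ?thesis .
  qed
  have "real m' * c \<le> (\<Sum>y<m'. \<Sum>x<m. s x y * r x y)"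
    using sum_mono[of "{..<m'}" "\<lambda>_. c", OF column] by simp
  also have "\<dots> = (\<Sum>x<m. \<Sum>y<m'. s x y * dot k (unitize k (U x)) (unitize k (Z y)))"
    unfolding r_def by (rule sum.swap)
  also have "\<dots> \<le> \<sigma> * (sqrt (real m) * sqrt (real m'))"
    using \<open>0 \<le> \<sigma>\<close> bound U Z by (intro sum_sign_dot_le) (auto simp: sqnorm_unitize)
  finally show ?thesis .
qed


lemma forster_approx:
  fixes s u v :: "nat \<Rightarrow> nat \<Rightarrow> real"
  assumes "0 < k" and "0 < m" and gp: "windows_nonsingular k m u"
    and sgn: "sign_rep k m m' s u v" and s1: "\<And>x y. x < m \<Longrightarrow> y < m' \<Longrightarrow> \<bar>s x y\<bar> = 1"
    and "0 \<le> \<sigma>"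
    and bound: "\<And>a b. (\<Sum>x<m. \<Sum>y<m'. s x y * a x * b y) \<le> \<sigma> * sqrt (\<Sum>x<m. (a x)\<^sup>2) * sqrt (\<Sum>y<m'. (b y)\<^sup>2)"
    and "0 < \<epsilon>"
  shows "real m' * (real m / real k - \<epsilon>) \<le> \<sigma> * (sqrt (real m) * sqrt (real m'))"
proof -
  obtain A where A: "mat_det k A \<noteq> 0"
    and iso: "\<And>z. (real m / real k - \<epsilon>) * sqnorm k z \<le> frame_form k m (\<lambda>x. mat_vec k A (u x)) z"
    using ex_approx_isotropic[OF \<open>0 < k\<close> \<open>0 < m\<close> gp \<open>0 < \<epsilon>\<close>] by blast
  obtain B where B: "\<And>j l. j < k \<Longrightarrow> l < k \<Longrightarrow> (\<Sum>i<k. A i j * B i l) = kron j l"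
    using ex_dual_mat[OF A] by blast
  define U where "U x = mat_vec k A (u x)" for x
  define Z where "Z y = mat_vec k B (v y)" for y
  have UZ: "dot k (U x) (Z y) = dot k (u x) (v y)" for x y
    unfolding U_def Z_def using B by (rule dot_mat_vec_dual)
  have U_pos: "0 < sqnorm k (U x)" if "x < m" for x
    unfolding U_def using gp A that \<open>0 < k\<close> by (rule sqnorm_mat_vec_pos)
  have Z_pos: "0 < sqnorm k (Z y)" if "y < m'" for y
  proof -
    have "dot k (Z y) (U 0) \<noteq> 0"
      using sgn \<open>0 < m\<close> that unfolding sign_rep_def dot_commute[of k "Z y"] UZ by fastforce
    then have "sqnorm k (Z y) \<noteq> 0"
      using dot_eq_0_if_sqnorm_eq_0 by blast
    then show ?thesis
      using sqnorm_nonneg[of k "Z y"] by linarith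
  qed
  have "sign_rep k m m' s U Z"
    using sgn unfolding sign_rep_def UZ .
  then show ?thesis
    using U_pos Z_pos s1 iso \<open>0 \<le> \<sigma>\<close> bound unfolding U_def
    by (intro forster_isotropic) auto
qed

theorem forster:
  fixes s u v :: "nat \<Rightarrow> nat \<Rightarrow> real"
  assumes "0 < k" and "k \<le> m" and "0 < m'"
    and sgn: "sign_rep k m m' s u v" and s1: "\<And>x y. x < m \<Longrightarrow> y < m' \<Longrightarrow> \<bar>s x y\<bar> = 1"
    and "0 \<le> \<sigma>"
    and bound: "\<And>a b. (\<Sum>x<m. \<Sum>y<m'. s x y * a x * b y) \<le> \<sigma> * sqrt (\<Sum>x<m. (a x)\<^sup>2) * sqrt (\<Sum>y<m'. (b y)\<^sup>2)"
  shows "real m * real m' \<le> \<sigma>\<^sup>2 * (real k)\<^sup>2"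
proof -
  have "0 < m"
    using \<open>0 < k\<close> \<open>k \<le> m\<close> by simp
  obtain u' where gp: "windows_nonsingular k m u'" and sgn': "sign_rep k m m' s u' v"
    using ex_windows_nonsingular_sign_rep[OF \<open>k \<le> m\<close> sgn s1] by blast
  define R where "R = \<sigma> * (sqrt (real m) * sqrt (real m'))"
  have "real m' * real m / real k \<le> R"
  proof (rule field_le_epsilon)
    fix e :: real assume "0 < e"
    then show "real m' * real m / real k \<le> R + e"
      using forster_approx[OF \<open>0 < k\<close> \<open>0 < m\<close> gp sgn' s1 \<open>0 \<le> \<sigma>\<close> bound, of "e / real m'"] \<open>0 < m'\<close>
      by (simp add: R_def right_diff_distrib)
  qed
  then have "(real m' * real m / real k)\<^sup>2 \<le> R\<^sup>2"
    by (intro power_mono) auto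
  also have "R\<^sup>2 = \<sigma>\<^sup>2 * (real m * real m')"
    unfolding R_def by (simp add: power_mult_distrib)
  finally have "(real m * real m') * (real m * real m') \<le> (\<sigma>\<^sup>2 * (real k)\<^sup>2) * (real m * real m')"
    using \<open>0 < k\<close> by (simp add: power_divide divide_le_eq power2_eq_square algebra_simps)
  moreover have "0 < real m * real m'"
    using \<open>0 < m\<close> \<open>0 < m'\<close> by simp
  ultimately show ?thesis
    by (meson mult_right_le_imp_le)
qed

section \<open>The inner product function\<close>

lemma prod_lessThan_double:
  fixes f :: "nat \<Rightarrow> 'a :: comm_monoid_mult"
  shows "(\<Prod>i<n + n. f i) = (\<Prod>i<n. f i) * (\<Prod>i<n. f (n + i))"
proof -
  have "(\<Prod>i<n + n. f i) = prod f {0..<n} * prod f {n..<n + n}"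
    using prod.atLeastLessThan_concat[of 0 n "n + n" f] by (simp add: atLeast0LessThan)
  also have "prod f {n..<n + n} = (\<Prod>i = 0..<n. f (i + n))"
    using prod.shift_bounds_nat_ivl[of f 0 n n] by simp
  finally show ?thesis
    by (simp add: atLeast0LessThan add.commute)
qed

lemma prod_sum_rep_IP_sign_rep:
  assumes "prod_sum_rep k (2 * n) (IP n)"
  obtains u v :: "bool list \<Rightarrow> nat \<Rightarrow> real" where
    "\<And>X Y. length X = n \<Longrightarrow> length Y = n \<Longrightarrow> 0 < (if IP n (X @ Y) then 1 else -1) * dot k (u X) (v Y)"
proof -
  obtain w p q where rep: "\<And>a. length a = 2 * n \<Longrightarrow>
      prod_sum k (2 * n) w p q a \<noteq> 0 \<and> (IP n a \<longleftrightarrow> 0 < prod_sum k (2 * n) w p q a)"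
    using assms unfolding prod_sum_rep_def by blast
  define u where "u X j = (\<Prod>i<n. if X ! i then p j i else q j i)" for X j
  define v where "v Y j = w j * (\<Prod>i<n. if Y ! i then p j (n + i) else q j (n + i))" for Y j
  have split: "prod_sum k (2 * n) w p q (X @ Y) = dot k (u X) (v Y)" if "length X = n" "length Y = n" for X Y
    unfolding prod_sum_def dot_def mult_2 prod_lessThan_double u_def v_def
    using that by (intro sum.cong refl) (simp add: nth_append algebra_simps)
  show ?thesis
  proof (rule that)
    fix X Y :: "bool list" assume "length X = n" "length Y = n"
    then show "0 < (if IP n (X @ Y) then 1 else -1) * dot k (u X) (v Y)"
      using rep[of "X @ Y"] split[of X Y] by (auto simp: less_le)
  qed
qed

definition hadamard :: "nat \<Rightarrow> bool list \<Rightarrow> bool list \<Rightarrow> real" where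
  "hadamard n X Y = (\<Prod>i<n. if X ! i \<and> Y ! i then -1 else 1)"

lemma prod_neg_one_if:
  fixes n :: nat
  shows "(\<Prod>i<n. if P i then -1 else 1 :: real) = (if odd (card {i. i < n \<and> P i}) then -1 else 1)"
proof (induction n)
  case 0
  then show ?case by simp
next
  case (Suc n)
  show ?case
  proof (cases "P n")
    case True
    then have "{i. i < Suc n \<and> P i} = insert n {i. i < n \<and> P i}"
      by (auto simp: less_Suc_eq)
    then show ?thesis
      using Suc True by (simp add: card_insert_disjoint)
  next
    case False
    then have "{i. i < Suc n \<and> P i} = {i. i < n \<and> P i}"
      by (auto simp: less_Suc_eq)
    then show ?thesis
      using Suc False by simp
  qed
qed

lemma hadamard_IP:
  assumes "length X = n" and "length Y = n"
  shows "hadamard n X Y = (if IP n (X @ Y) then -1 else 1)"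
proof -
  have "{i. i < n \<and> (X @ Y) ! i \<and> (X @ Y) ! (n + i)} = {i. i < n \<and> X ! i \<and> Y ! i}"
    using assms by (auto simp: nth_append)
  then show ?thesis
    unfolding hadamard_def IP_def prod_neg_one_if by simp
qed

lemma sum_bool_lists_prod:
  "(\<Sum>X | length X = n. \<Prod>i<n. g i (X ! i)) = (\<Prod>i<n. g i False + g i True :: real)"
proof (induction n arbitrary: g)
  case 0
  have "{X :: bool list. length X = 0} = {[]}"
    by auto
  then show ?case
    by simp
next
  case (Suc n)
  have lists: "{X :: bool list. length X = Suc n} = (\<lambda>(b, X). b # X) ` (UNIV \<times> {X. length X = n})"
    by (auto simp: length_Suc_conv image_iff)
  have inj: "inj_on (\<lambda>(b, X). b # X) (UNIV \<times> {X :: bool list. length X = n})"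
    by (auto simp: inj_on_def)
  have "(\<Sum>X | length X = Suc n. \<Prod>i<Suc n. g i (X ! i))
      = (\<Sum>(b, X)\<in>UNIV \<times> {X. length X = n}. g 0 b * (\<Prod>i<n. g (Suc i) (X ! i)))"
    unfolding lists sum.reindex[OF inj]
    by (intro sum.cong refl) (auto simp: prod.lessThan_Suc_shift simp del: prod.lessThan_Suc)
  also have "\<dots> = (\<Sum>b\<in>UNIV. g 0 b * (\<Prod>i<n. g (Suc i) False + g (Suc i) True))"
    using Suc.IH[of "\<lambda>i. g (Suc i)"]
    by (simp add: sum.cartesian_product[symmetric] flip: sum_distrib_left)
  also have "\<dots> = (\<Prod>i<Suc n. g i False + g i True)"
    by (simp add: UNIV_bool algebra_simps prod.lessThan_Suc_shift del: prod.lessThan_Suc)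
  finally show ?case .
qed

lemma hadamard_orthogonal:
  assumes "length Y = n" and "length Y' = n"
  shows "(\<Sum>X | length X = n. hadamard n X Y * hadamard n X Y') = (if Y = Y' then 2 ^ n else 0)"
proof -
  define g where "g i b = (if b \<and> Y ! i then -1 else 1) * (if b \<and> Y' ! i then -1 else 1 :: real)" for i b
  have "(\<Sum>X | length X = n. hadamard n X Y * hadamard n X Y') = (\<Prod>i<n. g i False + g i True)"
    unfolding hadamard_def g_def prod.distrib[symmetric] by (rule sum_bool_lists_prod)
  also have "\<dots> = (if Y = Y' then 2 ^ n else 0)"
  proof (cases "Y = Y'")
    case True
    then have "g i False + g i True = 2" for i
      by (simp add: g_def)
    then show ?thesis
      using True by simp
  next
    case False
    then obtain i where "i < n" "Y ! i \<noteq> Y' ! i"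
      using assms nth_equalityI[of Y Y'] by auto
    then have "g i False + g i True = 0"
      by (auto simp: g_def)
    then show ?thesis
      using False \<open>i < n\<close> by (auto intro: prod_zero)
  qed
  finally show ?thesis .
qed

lemma ex_bij_betw_bool_lists:
  obtains e :: "nat \<Rightarrow> bool list" where "bij_betw e {..<2 ^ n} {X. length X = n}"
proof -
  have "\<exists>e :: nat \<Rightarrow> bool list. bij_betw e {0..<card {X :: bool list. length X = n}} {X. length X = n}"
    by (rule ex_bij_betw_nat_finite[OF finite_bool_lists_length])
  then show ?thesis
    using that by (auto simp: card_bool_lists_length atLeast0LessThan)
qed

lemma hadamard_orthogonal_enum:
  assumes e: "bij_betw e {..<2 ^ n} {X. length X = n}" and "y < 2 ^ n" and "y' < 2 ^ n"
  shows "(\<Sum>x<2 ^ n. hadamard n (e x) (e y) * hadamard n (e x) (e y')) = (if y = y' then 2 ^ n else 0)"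
proof -
  have len: "length (e x) = n" if "x < 2 ^ n" for x
    using bij_betwE[OF e] that by auto
  have "(\<Sum>x<2 ^ n. hadamard n (e x) (e y) * hadamard n (e x) (e y'))
      = (\<Sum>X | length X = n. hadamard n X (e y) * hadamard n X (e y'))"
    by (rule sum.reindex_bij_betw[OF e])
  also have "\<dots> = (if y = y' then 2 ^ n else 0)"
    using hadamard_orthogonal[OF len len, OF assms(2,3)] bij_betw_imp_inj_on[OF e] assms(2,3)
    by (auto simp: inj_on_def)
  finally show ?thesis .
qed

lemma bilinear_le_of_orthogonal_columns:
  fixes s :: "nat \<Rightarrow> nat \<Rightarrow> real"
  assumes orth: "\<And>y y'. y < M \<Longrightarrow> y' < M \<Longrightarrow> (\<Sum>x<M. s x y * s x y') = (if y = y' then real M else 0)"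
  shows "(\<Sum>x<M. \<Sum>y<M. s x y * a x * b y) \<le> sqrt (real M) * sqrt (\<Sum>x<M. (a x)\<^sup>2) * sqrt (\<Sum>y<M. (b y)\<^sup>2)"
proof -
  define c where "c x = (\<Sum>y<M. s x y * b y)" for x
  have "(\<Sum>x<M. (c x)\<^sup>2) = (\<Sum>y<M. b y * (\<Sum>y'<M. (\<Sum>x<M. s x y * s x y') * b y'))"
    unfolding c_def power2_eq_square by (rule sum_bilinear_swap)
  also have "\<dots> = (\<Sum>y<M. b y * (real M * b y))"
  proof (intro sum.cong refl arg_cong[where f = "\<lambda>z. b _ * z"])
    fix y assume "y \<in> {..<M}"
    then have "(\<Sum>y'<M. (\<Sum>x<M. s x y * s x y') * b y') = (\<Sum>y'<M. if y = y' then real M * b y' else 0)"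
      using orth by (intro sum.cong refl) auto
    then show "(\<Sum>y'<M. (\<Sum>x<M. s x y * s x y') * b y') = real M * b y"
      using \<open>y \<in> {..<M}\<close> by simp
  qed
  finally have c_sq: "(\<Sum>x<M. (c x)\<^sup>2) = real M * (\<Sum>y<M. (b y)\<^sup>2)"
    by (simp add: sum_distrib_left power2_eq_square algebra_simps)
  have "(\<Sum>x<M. \<Sum>y<M. s x y * a x * b y) = (\<Sum>x<M. a x * c x)"
    unfolding c_def by (simp add: sum_distrib_left algebra_simps)
  also have "\<dots> \<le> sqrt (\<Sum>x<M. (a x)\<^sup>2) * sqrt (\<Sum>x<M. (c x)\<^sup>2)"
    by (rule sum_mult_le_sqrt)
  finally show ?thesis
    unfolding c_sq by (simp add: real_sqrt_mult algebra_simps)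
qed

lemma sign_rank_IP:
  fixes u v :: "bool list \<Rightarrow> nat \<Rightarrow> real"
  assumes "0 < k"
    and uv: "\<And>X Y. length X = n \<Longrightarrow> length Y = n \<Longrightarrow> 0 < (if IP n (X @ Y) then 1 else -1) * dot k (u X) (v Y)"
  shows "2 ^ n \<le> (real k)\<^sup>2"
proof -
  define M where "M = (2 :: nat) ^ n"
  have "0 < M"
    by (simp add: M_def)
  have "real M \<le> (real k)\<^sup>2"
  proof (cases "k \<le> M")
    case False
    then have "real M \<le> real k * real k"
      using mult_mono[of "real M" "real k" 1 "real k"] by simp
    then show ?thesis
      by (simp add: power2_eq_square)
  next
    case True
    obtain e :: "nat \<Rightarrow> bool list" where e: "bij_betw e {..<M} {X. length X = n}"
      unfolding M_def by (rule ex_bij_betw_bool_lists[of n])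
    have len: "length (e x) = n" if "x < M" for x
      using bij_betwE[OF e] that by auto
    define s where "s x y = (if IP n (e x @ e y) then 1 else -1 :: real)" for x y
    have orth: "(\<Sum>x<M. s x y * s x y') = (if y = y' then real M else 0)" if "y < M" "y' < M" for y y'
    proof -
      have "(\<Sum>x<M. s x y * s x y') = (\<Sum>x<M. hadamard n (e x) (e y) * hadamard n (e x) (e y'))"
        using that hadamard_IP[OF len len] by (intro sum.cong refl) (simp add: s_def)
      also have "\<dots> = (if y = y' then real M else 0)"
        using hadamard_orthogonal_enum[OF e[unfolded M_def]] that by (simp add: M_def)
      finally show ?thesis .
    qed
    have "real M * real M \<le> (sqrt (real M))\<^sup>2 * (real k)\<^sup>2"
    proof (rule forster)
      show "sign_rep k M M s (\<lambda>x. u (e x)) (\<lambda>y. v (e y))"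
        unfolding sign_rep_def s_def using uv len by blast
      show "\<And>a b. (\<Sum>x<M. \<Sum>y<M. s x y * a x * b y)
          \<le> sqrt (real M) * sqrt (\<Sum>x<M. (a x)\<^sup>2) * sqrt (\<Sum>y<M. (b y)\<^sup>2)"
        using orth by (rule bilinear_le_of_orthogonal_columns)
    qed (use True \<open>0 < M\<close> \<open>0 < k\<close> in \<open>auto simp: s_def\<close>)
    moreover have "(sqrt (real M))\<^sup>2 = real M"
      by (rule real_sqrt_pow2) simp
    ultimately have "real M * real M \<le> real M * (real k)\<^sup>2"
      by (simp only:)
    then show ?thesis
      using \<open>0 < M\<close> mult_left_le_imp_le[of "real M" "real M" "(real k)\<^sup>2"] by simp
  qed
  then show ?thesis
    by (simp add: M_def)
qed

lemma NN_IP: "sqrt (2 ^ n) \<le> real (NN (2 * n) (IP n))"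
proof -
  obtain P N where "finite P" "finite N" "nn_rep (2 * n) (IP n) P N" "card (P \<union> N) = NN (2 * n) (IP n)"
    by (rule NN_attained)
  then have rep: "prod_sum_rep (NN (2 * n) (IP n)) (2 * n) (IP n)"
    using nn_rep_imp_prod_sum_rep[of P N "2 * n" "IP n"] by simp
  obtain u v where "\<And>X Y. length X = n \<Longrightarrow> length Y = n \<Longrightarrow>
      0 < (if IP n (X @ Y) then 1 else -1) * dot (NN (2 * n) (IP n)) (u X) (v Y)"
    using prod_sum_rep_IP_sign_rep[OF rep] by blast
  with prod_sum_rep_pos[OF rep] have "2 ^ n \<le> (real (NN (2 * n) (IP n)))\<^sup>2"
    by (rule sign_rank_IP)
  then show ?thesis
    by (intro real_le_lsqrt) auto
qed

theorem theorem8: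
  fixes n :: nat
  shows "real (NN (2 * n) (IP n)) \<ge> 2 powr (real n / 2) \<and> NN n parity \<ge> n + 1"
proof
  have "2 powr (real n / 2) = sqrt (2 ^ n)"
    by (simp add: powr_half_sqrt_powr powr_realpow)
  then show "real (NN (2 * n) (IP n)) \<ge> 2 powr (real n / 2)"
    using NN_IP by simp
  show "NN n parity \<ge> n + 1"
    by (rule NN_parity)
qed

end
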